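(* Let $J$ be a locally profinite group and $J^1$ a compact normal subgroup. Let $A$ be a finite length local $W(\overline{\mathbb{F}}_l)$-algebra with residue field $\overline{\mathbb{F}}_l$, and let $\eta_A$ be a finite-dimensional representation of $J^1$ over $A$ such that $\eta_A\otimes_A\overline{\mathbb{F}}_l$ is irreducible. Suppose $\eta_A$ extends to an $A$-representation $\Lambda_A$ of $J$. Then any other extension $\Lambda'_A$ of $\eta_A$ to a representation of $J$ is isomorphic to the twist of $\Lambda_A$ by a character of $J/J^1$ (with values in $A^\times$). *)

theory Defs
  imports "HOL-Algebra.QuotRing" "HOL-Analysis.Product_Topology" "HOL-Analysis.T1_Spaces" "HOL-Computational_Algebra.Primes"
begin

definition topological_group :: "'g monoid \<Rightarrow> 'g topology \<Rightarrow> bool" where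
  "topological_group G T \<longleftrightarrow> group G \<and> topspace T = carrier G \<and>
     continuous_map (prod_topology T T) T (\<lambda>(x, y). x \<otimes>\<^bsub>G\<^esub> y) \<and>
     continuous_map T T (\<lambda>x. inv\<^bsub>G\<^esub> x)"

definition locally_profinite :: "'g monoid \<Rightarrow> 'g topology \<Rightarrow> bool" where
  "locally_profinite G T \<longleftrightarrow> topological_group G T \<and> Hausdorff_space T \<and>
     (\<forall>U. openin T U \<and> \<one>\<^bsub>G\<^esub> \<in> U \<longrightarrow>
        (\<exists>K. subgroup K G \<and> openin T K \<and> compactin T K \<and> K \<subseteq> U))"

text \<open>W is characterised (up to isomorphism) as the complete discrete valuation ring
  of characteristic 0 with uniformiser l whose residue field W/lW is an algebraic
  closure of F_l (algebraically closed, and every element lies in some F_(l^k)).\<close>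
definition witt_Fbar :: "'w ring \<Rightarrow> nat \<Rightarrow> bool" where
  "witt_Fbar W l \<longleftrightarrow> domain W \<and> prime l \<and>
    (let p = add_pow W l \<one>\<^bsub>W\<^esub> in
      (\<forall>k::nat. k > 0 \<longrightarrow> add_pow W k \<one>\<^bsub>W\<^esub> \<noteq> \<zero>\<^bsub>W\<^esub>) \<and>
      p \<notin> Units W \<and>
      (\<forall>x \<in> carrier W - {\<zero>\<^bsub>W\<^esub>}. \<exists>u \<in> Units W. \<exists>k::nat. x = u \<otimes>\<^bsub>W\<^esub> (p [^]\<^bsub>W\<^esub> k)) \<and>
      (\<forall>x::nat \<Rightarrow> 'w. (\<forall>k. x k \<in> carrier W) \<and>
           (\<forall>k. \<exists>c \<in> carrier W. x (Suc k) \<ominus>\<^bsub>W\<^esub> x k = (p [^]\<^bsub>W\<^esub> k) \<otimes>\<^bsub>W\<^esub> c) \<longrightarrow>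
         (\<exists>y \<in> carrier W. \<forall>k. \<exists>c \<in> carrier W. y \<ominus>\<^bsub>W\<^esub> x k = (p [^]\<^bsub>W\<^esub> k) \<otimes>\<^bsub>W\<^esub> c)) \<and>
      (\<forall>m::nat. m \<ge> 1 \<longrightarrow> (\<forall>c \<in> {..<m} \<rightarrow> carrier W. \<exists>x \<in> carrier W. \<exists>d \<in> carrier W.
          x [^]\<^bsub>W\<^esub> m \<oplus>\<^bsub>W\<^esub> (\<Oplus>\<^bsub>W\<^esub> i\<in>{..<m}. c i \<otimes>\<^bsub>W\<^esub> x [^]\<^bsub>W\<^esub> i) = p \<otimes>\<^bsub>W\<^esub> d)) \<and>
      (\<forall>x \<in> carrier W. \<exists>k::nat. k \<ge> 1 \<and> (\<exists>d \<in> carrier W.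
          x [^]\<^bsub>W\<^esub> (l ^ k) \<ominus>\<^bsub>W\<^esub> x = p \<otimes>\<^bsub>W\<^esub> d)))"

definition max_ideal :: "'a ring \<Rightarrow> 'a set" where
  "max_ideal A = carrier A - Units A"

definition local_ring :: "'a ring \<Rightarrow> bool" where
  "local_ring A \<longleftrightarrow> cring A \<and> \<one>\<^bsub>A\<^esub> \<noteq> \<zero>\<^bsub>A\<^esub> \<and> ideal (max_ideal A) A"

definition W_submodule :: "'w ring \<Rightarrow> 'a ring \<Rightarrow> ('w \<Rightarrow> 'a) \<Rightarrow> 'a set \<Rightarrow> bool" where
  "W_submodule W A \<phi> S \<longleftrightarrow> S \<subseteq> carrier A \<and> \<zero>\<^bsub>A\<^esub> \<in> S \<and>
     (\<forall>x\<in>S. \<forall>y\<in>S. x \<oplus>\<^bsub>A\<^esub> y \<in> S) \<and> (\<forall>w\<in>carrier W. \<forall>x\<in>S. \<phi> w \<otimes>\<^bsub>A\<^esub> x \<in> S)"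

definition W_finite_length :: "'w ring \<Rightarrow> 'a ring \<Rightarrow> ('w \<Rightarrow> 'a) \<Rightarrow> bool" where
  "W_finite_length W A \<phi> \<longleftrightarrow> (\<exists>N::nat. \<forall>M::nat \<Rightarrow> 'a set. \<forall>k::nat.
     (\<forall>i\<le>k. W_submodule W A \<phi> (M i)) \<and> (\<forall>i<k. M i \<subset> M (Suc i)) \<longrightarrow> k \<le> N)"

text \<open>A finite length local W-algebra (structure map phi) whose residue field is
  W/lW via phi, i.e. phi induces a surjection onto the residue field.\<close>
definition fin_length_local_W_alg :: "'w ring \<Rightarrow> 'a ring \<Rightarrow> ('w \<Rightarrow> 'a) \<Rightarrow> bool" where
  "fin_length_local_W_alg W A \<phi> \<longleftrightarrow> local_ring A \<and> \<phi> \<in> ring_hom W A \<and>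
     W_finite_length W A \<phi> \<and>
     (\<forall>a\<in>carrier A. \<exists>w\<in>carrier W. a \<ominus>\<^bsub>A\<^esub> \<phi> w \<in> max_ideal A)"

definition vec_carrier :: "('a,'b) ring_scheme \<Rightarrow> nat \<Rightarrow> (nat \<Rightarrow> 'a) set" where
  "vec_carrier R n = {..<n} \<rightarrow>\<^sub>E carrier R"

definition mat_carrier :: "('a,'b) ring_scheme \<Rightarrow> nat \<Rightarrow> (nat \<times> nat \<Rightarrow> 'a) set" where
  "mat_carrier R n = ({..<n} \<times> {..<n}) \<rightarrow>\<^sub>E carrier R"

definition mat_mul :: "('a,'b) ring_scheme \<Rightarrow> nat \<Rightarrow> (nat \<times> nat \<Rightarrow> 'a) \<Rightarrow> (nat \<times> nat \<Rightarrow> 'a) \<Rightarrow> (nat \<times> nat \<Rightarrow> 'a)" where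
  "mat_mul R n M N = (\<lambda>p\<in>{..<n} \<times> {..<n}. \<Oplus>\<^bsub>R\<^esub> k\<in>{..<n}. M (fst p, k) \<otimes>\<^bsub>R\<^esub> N (k, snd p))"

definition mat_one :: "('a,'b) ring_scheme \<Rightarrow> nat \<Rightarrow> (nat \<times> nat \<Rightarrow> 'a)" where
  "mat_one R n = (\<lambda>p\<in>{..<n} \<times> {..<n}. if fst p = snd p then \<one>\<^bsub>R\<^esub> else \<zero>\<^bsub>R\<^esub>)"

definition GL :: "('a,'b) ring_scheme \<Rightarrow> nat \<Rightarrow> (nat \<times> nat \<Rightarrow> 'a) set" where
  "GL R n = {M \<in> mat_carrier R n. \<exists>N \<in> mat_carrier R n.
              mat_mul R n M N = mat_one R n \<and> mat_mul R n N M = mat_one R n}"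

definition mat_smult :: "('a,'b) ring_scheme \<Rightarrow> nat \<Rightarrow> 'a \<Rightarrow> (nat \<times> nat \<Rightarrow> 'a) \<Rightarrow> (nat \<times> nat \<Rightarrow> 'a)" where
  "mat_smult R n c M = (\<lambda>p\<in>{..<n} \<times> {..<n}. c \<otimes>\<^bsub>R\<^esub> M p)"

definition mat_vec :: "('a,'b) ring_scheme \<Rightarrow> nat \<Rightarrow> (nat \<times> nat \<Rightarrow> 'a) \<Rightarrow> (nat \<Rightarrow> 'a) \<Rightarrow> (nat \<Rightarrow> 'a)" where
  "mat_vec R n M v = (\<lambda>i\<in>{..<n}. \<Oplus>\<^bsub>R\<^esub> k\<in>{..<n}. M (i, k) \<otimes>\<^bsub>R\<^esub> v k)"

definition vec_add :: "('a,'b) ring_scheme \<Rightarrow> nat \<Rightarrow> (nat \<Rightarrow> 'a) \<Rightarrow> (nat \<Rightarrow> 'a) \<Rightarrow> (nat \<Rightarrow> 'a)" where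
  "vec_add R n v w = (\<lambda>i\<in>{..<n}. v i \<oplus>\<^bsub>R\<^esub> w i)"

definition vec_smult :: "('a,'b) ring_scheme \<Rightarrow> nat \<Rightarrow> 'a \<Rightarrow> (nat \<Rightarrow> 'a) \<Rightarrow> (nat \<Rightarrow> 'a)" where
  "vec_smult R n c v = (\<lambda>i\<in>{..<n}. c \<otimes>\<^bsub>R\<^esub> v i)"

definition vec_zero :: "('a,'b) ring_scheme \<Rightarrow> nat \<Rightarrow> (nat \<Rightarrow> 'a)" where
  "vec_zero R n = (\<lambda>i\<in>{..<n}. \<zero>\<^bsub>R\<^esub>)"

definition smooth_rep :: "'g monoid \<Rightarrow> 'g topology \<Rightarrow> 'a ring \<Rightarrow> nat \<Rightarrow> 'g set \<Rightarrow> ('g \<Rightarrow> nat \<times> nat \<Rightarrow> 'a) \<Rightarrow> bool" where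
  "smooth_rep G T R n H \<rho> \<longleftrightarrow>
     (\<forall>g\<in>H. \<rho> g \<in> GL R n) \<and>
     (\<forall>g\<in>H. \<forall>h\<in>H. \<rho> (g \<otimes>\<^bsub>G\<^esub> h) = mat_mul R n (\<rho> g) (\<rho> h)) \<and>
     (\<forall>v\<in>vec_carrier R n. openin (subtopology T H) {g\<in>H. mat_vec R n (\<rho> g) v = v})"

definition reduce_mat :: "'a ring \<Rightarrow> nat \<Rightarrow> (nat \<times> nat \<Rightarrow> 'a) \<Rightarrow> (nat \<times> nat \<Rightarrow> 'a set)" where
  "reduce_mat A n M = (\<lambda>p\<in>{..<n} \<times> {..<n}. max_ideal A +>\<^bsub>A\<^esub> M p)"

definition irreducible_rep :: "'k ring \<Rightarrow> nat \<Rightarrow> 'g set \<Rightarrow> ('g \<Rightarrow> nat \<times> nat \<Rightarrow> 'k) \<Rightarrow> bool" where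
  "irreducible_rep K n H \<rho> \<longleftrightarrow> n > 0 \<and>
     (\<forall>S. S \<subseteq> vec_carrier K n \<and> vec_zero K n \<in> S \<and>
          (\<forall>v\<in>S. \<forall>w\<in>S. vec_add K n v w \<in> S) \<and>
          (\<forall>c\<in>carrier K. \<forall>v\<in>S. vec_smult K n c v \<in> S) \<and>
          (\<forall>g\<in>H. \<forall>v\<in>S. mat_vec K n (\<rho> g) v \<in> S)
        \<longrightarrow> S = {vec_zero K n} \<or> S = vec_carrier K n)"

text \<open>eta tensor_A F_l-bar is irreducible.\<close>
definition residually_irreducible :: "'a ring \<Rightarrow> nat \<Rightarrow> 'g set \<Rightarrow> ('g \<Rightarrow> nat \<times> nat \<Rightarrow> 'a) \<Rightarrow> bool" where
  "residually_irreducible A n H \<rho> \<longleftrightarrow>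
     irreducible_rep (A Quot (max_ideal A)) n H (\<lambda>g. reduce_mat A n (\<rho> g))"

text \<open>A smooth character of J/J1 with values in A^x, viewed as a function on J.\<close>
definition smooth_char_quot :: "'g monoid \<Rightarrow> 'g topology \<Rightarrow> 'a ring \<Rightarrow> 'g set \<Rightarrow> ('g \<Rightarrow> 'a) \<Rightarrow> bool" where
  "smooth_char_quot G T A N \<chi> \<longleftrightarrow>
     (\<forall>g\<in>carrier G. \<chi> g \<in> Units A) \<and>
     (\<forall>g\<in>carrier G. \<forall>h\<in>carrier G. \<chi> (g \<otimes>\<^bsub>G\<^esub> h) = \<chi> g \<otimes>\<^bsub>A\<^esub> \<chi> h) \<and>
     (\<forall>g\<in>N. \<chi> g = \<one>\<^bsub>A\<^esub>) \<and>
     openin T {g\<in>carrier G. \<chi> g = \<one>\<^bsub>A\<^esub>}"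

end

theory Submission
  imports Defs
begin

text \<open>
  Since two extensions Lambda, Lambda' of eta agree on the normal subgroup J1, for every g
  the matrix Lambda(g)^-1 Lambda'(g) commutes with eta(J1). The heart of the proof is a Schur
  lemma over A: every matrix commuting with eta is scalar. Modulo the maximal ideal this is
  the classical Schur lemma, as eta is residually irreducible and the residue field of A,
  being a quotient of W(F_l-bar), is algebraically closed. It lifts to A by descending
  induction over the ideals of A, which terminates because A has finite length: if I is
  minimal among the ideals strictly containing J, then I/J is one-dimensional over the
  residue field, so a congruence modulo I is refined to one modulo J by the residual Schur
  lemma. Hence Lambda'(g) = chi(g) Lambda(g) for a unique unit chi(g); uniqueness makes chi a
  character trivial on J1, and chi is smooth because it is trivial on the open subgroup
  where Lambda and Lambda' are both trivial.
\<close>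

section \<open>Matrices over a commutative ring\<close>

lemma mat_carrierD: "M \<in> mat_carrier R n \<Longrightarrow> i < n \<Longrightarrow> j < n \<Longrightarrow> M (i,j) \<in> carrier R"
  unfolding mat_carrier_def by (auto simp: PiE_iff)

lemma mat_eqI: "M \<in> mat_carrier R n \<Longrightarrow> N \<in> mat_carrier R n \<Longrightarrow> (\<And>i j. i < n \<Longrightarrow> j < n \<Longrightarrow> M (i,j) = N (i,j)) \<Longrightarrow> M = N"
  unfolding mat_carrier_def by (rule PiE_ext) auto

lemma vec_carrierD: "v \<in> vec_carrier R n \<Longrightarrow> i < n \<Longrightarrow> v i \<in> carrier R"
  unfolding vec_carrier_def by (auto simp: PiE_iff)

lemma vec_eqI: "v \<in> vec_carrier R n \<Longrightarrow> w \<in> vec_carrier R n \<Longrightarrow> (\<And>i. i < n \<Longrightarrow> v i = w i) \<Longrightarrow> v = w"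
  unfolding vec_carrier_def by (rule PiE_ext) auto

lemma mat_mul_entry: "i < n \<Longrightarrow> j < n \<Longrightarrow> mat_mul R n M N (i,j) = (\<Oplus>\<^bsub>R\<^esub> k\<in>{..<n}. M (i, k) \<otimes>\<^bsub>R\<^esub> N (k, j))"
  by (simp add: mat_mul_def)
lemma mat_one_entry: "i < n \<Longrightarrow> j < n \<Longrightarrow> mat_one R n (i,j) = (if i = j then \<one>\<^bsub>R\<^esub> else \<zero>\<^bsub>R\<^esub>)"
  by (simp add: mat_one_def)
lemma mat_smult_entry: "i < n \<Longrightarrow> j < n \<Longrightarrow> mat_smult R n c M (i,j) = c \<otimes>\<^bsub>R\<^esub> M (i,j)"
  by (simp add: mat_smult_def)
lemma mat_vec_entry: "i < n \<Longrightarrow> mat_vec R n M v i = (\<Oplus>\<^bsub>R\<^esub> k\<in>{..<n}. M (i, k) \<otimes>\<^bsub>R\<^esub> v k)"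
  by (simp add: mat_vec_def)
lemma vec_add_entry: "i < n \<Longrightarrow> vec_add R n v w i = v i \<oplus>\<^bsub>R\<^esub> w i"
  by (simp add: vec_add_def)
lemma vec_smult_entry: "i < n \<Longrightarrow> vec_smult R n c v i = c \<otimes>\<^bsub>R\<^esub> v i"
  by (simp add: vec_smult_def)
lemma vec_zero_entry: "i < n \<Longrightarrow> vec_zero R n i = \<zero>\<^bsub>R\<^esub>"
  by (simp add: vec_zero_def)

lemmas mat_entry_simps = mat_mul_entry mat_one_entry mat_smult_entry mat_vec_entry vec_add_entry
  vec_smult_entry vec_zero_entry

definition unit_vec :: "('a,'b) ring_scheme \<Rightarrow> nat \<Rightarrow> nat \<Rightarrow> (nat \<Rightarrow> 'a)" where
  "unit_vec R n j = (\<lambda>k\<in>{..<n}. if k = j then \<one>\<^bsub>R\<^esub> else \<zero>\<^bsub>R\<^esub>)"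

context cring
begin

lemma finsum_swap:
  assumes "finite A" "finite B" "\<And>i j. i \<in> A \<Longrightarrow> j \<in> B \<Longrightarrow> f i j \<in> carrier R"
  shows "(\<Oplus>i\<in>A. \<Oplus>j\<in>B. f i j) = (\<Oplus>j\<in>B. \<Oplus>i\<in>A. f i j)"
  using assms
proof (induct A rule: finite_induct)
  case empty
  then show ?case by (simp add: finsum_zero)
next
  case (insert x F)
  have "(\<Oplus>i\<in>insert x F. \<Oplus>j\<in>B. f i j) = (\<Oplus>j\<in>B. f x j) \<oplus> (\<Oplus>i\<in>F. \<Oplus>j\<in>B. f i j)"
    using insert by (intro finsum_insert) (auto intro!: finsum_closed)
  also have "\<dots> = (\<Oplus>j\<in>B. f x j) \<oplus> (\<Oplus>j\<in>B. \<Oplus>i\<in>F. f i j)"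
    using insert by simp
  also have "\<dots> = (\<Oplus>j\<in>B. f x j \<oplus> (\<Oplus>i\<in>F. f i j))"
    using insert by (intro finsum_addf[symmetric]) (auto intro!: finsum_closed)
  also have "\<dots> = (\<Oplus>j\<in>B. \<Oplus>i\<in>insert x F. f i j)"
    using insert by (intro finsum_cong) (auto intro!: finsum_closed simp: finsum_insert)
  finally show ?case .
qed

lemma mat_mul_closed: "M \<in> mat_carrier R n \<Longrightarrow> N \<in> mat_carrier R n \<Longrightarrow> mat_mul R n M N \<in> mat_carrier R n"
  unfolding mat_mul_def mat_carrier_def
  by (auto simp: PiE_iff intro!: finsum_closed)

lemma mat_one_closed: "mat_one R n \<in> mat_carrier R n"
  unfolding mat_one_def mat_carrier_def by (auto simp: PiE_iff)

lemma mat_smult_closed: "c \<in> carrier R \<Longrightarrow> M \<in> mat_carrier R n \<Longrightarrow> mat_smult R n c M \<in> mat_carrier R n"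
  unfolding mat_smult_def mat_carrier_def by (auto simp: PiE_iff)

lemma mat_vec_closed: "M \<in> mat_carrier R n \<Longrightarrow> v \<in> vec_carrier R n \<Longrightarrow> mat_vec R n M v \<in> vec_carrier R n"
  unfolding mat_vec_def vec_carrier_def mat_carrier_def
  by (auto simp: PiE_iff intro!: finsum_closed)

lemma vec_add_closed: "v \<in> vec_carrier R n \<Longrightarrow> w \<in> vec_carrier R n \<Longrightarrow> vec_add R n v w \<in> vec_carrier R n"
  unfolding vec_add_def vec_carrier_def by (auto simp: PiE_iff)

lemma vec_smult_closed: "c \<in> carrier R \<Longrightarrow> v \<in> vec_carrier R n \<Longrightarrow> vec_smult R n c v \<in> vec_carrier R n"
  unfolding vec_smult_def vec_carrier_def by (auto simp: PiE_iff)

lemma vec_zero_closed: "vec_zero R n \<in> vec_carrier R n"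
  unfolding vec_zero_def vec_carrier_def by (auto simp: PiE_iff)

lemma mat_mul_assoc:
  assumes M: "M \<in> mat_carrier R n" and N: "N \<in> mat_carrier R n" and P: "P \<in> mat_carrier R n"
  shows "mat_mul R n (mat_mul R n M N) P = mat_mul R n M (mat_mul R n N P)"
proof (rule mat_eqI[OF mat_mul_closed mat_mul_closed])
  fix i j assume ij: "i < n" "j < n"
  note cM = mat_carrierD[OF M] and cN = mat_carrierD[OF N] and cP = mat_carrierD[OF P]
  have "mat_mul R n (mat_mul R n M N) P (i,j) = (\<Oplus>k\<in>{..<n}. (\<Oplus>l\<in>{..<n}. M(i,l) \<otimes> N(l,k)) \<otimes> P(k,j))"
    using ij cM cN cP by (auto simp: mat_mul_entry intro!: finsum_cong finsum_closed)
  also have "\<dots> = (\<Oplus>k\<in>{..<n}. \<Oplus>l\<in>{..<n}. M(i,l) \<otimes> N(l,k) \<otimes> P(k,j))"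
    using ij cM cN cP by (intro finsum_cong refl) (auto simp: finsum_ldistr)
  also have "\<dots> = (\<Oplus>l\<in>{..<n}. \<Oplus>k\<in>{..<n}. M(i,l) \<otimes> N(l,k) \<otimes> P(k,j))"
    using ij cM cN cP by (intro finsum_swap) auto
  also have "\<dots> = (\<Oplus>l\<in>{..<n}. M(i,l) \<otimes> (\<Oplus>k\<in>{..<n}. N(l,k) \<otimes> P(k,j)))"
    using ij cM cN cP by (intro finsum_cong refl) (auto simp: finsum_rdistr m_assoc simp_implies_def intro!: finsum_cong)
  also have "\<dots> = mat_mul R n M (mat_mul R n N P) (i,j)"
    using ij cM cN cP by (auto simp: mat_mul_entry simp_implies_def intro!: finsum_cong finsum_closed)
  finally show "mat_mul R n (mat_mul R n M N) P (i,j) = mat_mul R n M (mat_mul R n N P) (i,j)" .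
qed (use assms in \<open>auto intro: mat_mul_closed\<close>)

lemma mat_one_left:
  assumes M: "M \<in> mat_carrier R n"
  shows "mat_mul R n (mat_one R n) M = M"
proof (rule mat_eqI[OF mat_mul_closed[OF mat_one_closed M] M])
  fix i j assume ij: "i < n" "j < n"
  note cM = mat_carrierD[OF M]
  have "mat_mul R n (mat_one R n) M (i,j) = (\<Oplus>k\<in>{..<n}. if i = k then M(k,j) else \<zero>)"
    using ij cM by (auto simp: mat_mul_entry mat_one_entry simp_implies_def intro!: finsum_cong)
  also have "\<dots> = M(i,j)" using ij cM by (intro finsum_singleton) auto
  finally show "mat_mul R n (mat_one R n) M (i,j) = M(i,j)" .
qed

lemma mat_one_right:
  assumes M: "M \<in> mat_carrier R n"
  shows "mat_mul R n M (mat_one R n) = M"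
proof (rule mat_eqI[OF mat_mul_closed[OF M mat_one_closed] M])
  fix i j assume ij: "i < n" "j < n"
  note cM = mat_carrierD[OF M]
  have "mat_mul R n M (mat_one R n) (i,j) = (\<Oplus>k\<in>{..<n}. if j = k then M(i,k) else \<zero>)"
    using ij cM by (auto simp: mat_mul_entry mat_one_entry simp_implies_def intro!: finsum_cong)
  also have "\<dots> = M(i,j)" using ij cM by (intro finsum_singleton) auto
  finally show "mat_mul R n M (mat_one R n) (i,j) = M(i,j)" .
qed

lemma mat_smult_mul_left:
  assumes c: "c \<in> carrier R" and M: "M \<in> mat_carrier R n" and N: "N \<in> mat_carrier R n"
  shows "mat_mul R n (mat_smult R n c M) N = mat_smult R n c (mat_mul R n M N)"
proof (rule mat_eqI[OF mat_mul_closed[OF mat_smult_closed[OF c M] N] mat_smult_closed[OF c mat_mul_closed[OF M N]]])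
  fix i j assume ij: "i < n" "j < n"
  note cM = mat_carrierD[OF M] and cN = mat_carrierD[OF N]
  show "mat_mul R n (mat_smult R n c M) N (i,j) = mat_smult R n c (mat_mul R n M N) (i,j)"
    using ij cM cN c by (simp add: mat_mul_entry mat_smult_entry finsum_rdistr m_assoc cong: finsum_cong)
qed

lemma mat_smult_mul_right:
  assumes c: "c \<in> carrier R" and M: "M \<in> mat_carrier R n" and N: "N \<in> mat_carrier R n"
  shows "mat_mul R n M (mat_smult R n c N) = mat_smult R n c (mat_mul R n M N)"
proof (rule mat_eqI[OF mat_mul_closed[OF M mat_smult_closed[OF c N]] mat_smult_closed[OF c mat_mul_closed[OF M N]]])
  fix i j assume ij: "i < n" "j < n"
  note cM = mat_carrierD[OF M] and cN = mat_carrierD[OF N]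
  have "\<And>k. k < n \<Longrightarrow> M (i,k) \<otimes> (c \<otimes> N (k,j)) = c \<otimes> (M (i,k) \<otimes> N (k,j))"
    using ij cM cN c by (simp add: m_lcomm)
  then show "mat_mul R n M (mat_smult R n c N) (i,j) = mat_smult R n c (mat_mul R n M N) (i,j)"
    using ij cM cN c by (simp add: mat_mul_entry mat_smult_entry finsum_rdistr cong: finsum_cong)
qed

lemma mat_smult_smult:
  assumes c: "c \<in> carrier R" and d: "d \<in> carrier R" and M: "M \<in> mat_carrier R n"
  shows "mat_smult R n c (mat_smult R n d M) = mat_smult R n (c \<otimes> d) M"
  using assms by (intro mat_eqI) (auto simp: mat_smult_entry m_assoc mat_carrierD intro!: mat_smult_closed)

lemma mat_smult_one: "M \<in> mat_carrier R n \<Longrightarrow> mat_smult R n \<one> M = M"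
  by (intro mat_eqI) (auto simp: mat_smult_entry mat_carrierD intro!: mat_smult_closed)

lemma mat_vec_mul:
  assumes M: "M \<in> mat_carrier R n" and N: "N \<in> mat_carrier R n" and v: "v \<in> vec_carrier R n"
  shows "mat_vec R n (mat_mul R n M N) v = mat_vec R n M (mat_vec R n N v)"
proof (rule vec_eqI[OF mat_vec_closed[OF mat_mul_closed[OF M N] v] mat_vec_closed[OF M mat_vec_closed[OF N v]]])
  fix i assume i: "i < n"
  note cM = mat_carrierD[OF M] and cN = mat_carrierD[OF N] and cv = vec_carrierD[OF v]
  have "mat_vec R n (mat_mul R n M N) v i = (\<Oplus>k\<in>{..<n}. (\<Oplus>l\<in>{..<n}. M(i,l) \<otimes> N(l,k)) \<otimes> v k)"
    using i cM cN cv by (auto simp: mat_vec_entry mat_mul_entry intro!: finsum_cong finsum_closed)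
  also have "\<dots> = (\<Oplus>k\<in>{..<n}. \<Oplus>l\<in>{..<n}. M(i,l) \<otimes> N(l,k) \<otimes> v k)"
    using i cM cN cv by (intro finsum_cong refl) (auto simp: finsum_ldistr)
  also have "\<dots> = (\<Oplus>l\<in>{..<n}. \<Oplus>k\<in>{..<n}. M(i,l) \<otimes> N(l,k) \<otimes> v k)"
    using i cM cN cv by (intro finsum_swap) auto
  also have "\<dots> = (\<Oplus>l\<in>{..<n}. M(i,l) \<otimes> (\<Oplus>k\<in>{..<n}. N(l,k) \<otimes> v k))"
    using i cM cN cv by (intro finsum_cong refl) (auto simp: finsum_rdistr m_assoc simp_implies_def intro!: finsum_cong)
  also have "\<dots> = mat_vec R n M (mat_vec R n N v) i"
    using i cM cN cv by (auto simp: mat_vec_entry simp_implies_def intro!: finsum_cong finsum_closed)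
  finally show "mat_vec R n (mat_mul R n M N) v i = mat_vec R n M (mat_vec R n N v) i" .
qed

lemma mat_vec_add:
  assumes M: "M \<in> mat_carrier R n" and v: "v \<in> vec_carrier R n" and w: "w \<in> vec_carrier R n"
  shows "mat_vec R n M (vec_add R n v w) = vec_add R n (mat_vec R n M v) (mat_vec R n M w)"
proof (rule vec_eqI[OF mat_vec_closed[OF M vec_add_closed[OF v w]] vec_add_closed[OF mat_vec_closed[OF M v] mat_vec_closed[OF M w]]])
  fix i assume i: "i < n"
  note cM = mat_carrierD[OF M] and cv = vec_carrierD[OF v] and cw = vec_carrierD[OF w]
  show "mat_vec R n M (vec_add R n v w) i = vec_add R n (mat_vec R n M v) (mat_vec R n M w) i"
    using i cM cv cw by (simp add: mat_vec_entry vec_add_entry r_distr finsum_addf cong: finsum_cong)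
qed

lemma mat_vec_smult:
  assumes M: "M \<in> mat_carrier R n" and c: "c \<in> carrier R" and v: "v \<in> vec_carrier R n"
  shows "mat_vec R n M (vec_smult R n c v) = vec_smult R n c (mat_vec R n M v)"
proof (rule vec_eqI[OF mat_vec_closed[OF M vec_smult_closed[OF c v]] vec_smult_closed[OF c mat_vec_closed[OF M v]]])
  fix i assume i: "i < n"
  note cM = mat_carrierD[OF M] and cv = vec_carrierD[OF v]
  have "\<And>k. k < n \<Longrightarrow> M (i,k) \<otimes> (c \<otimes> v k) = c \<otimes> (M (i,k) \<otimes> v k)"
    using i cM cv c by (simp add: m_lcomm)
  then show "mat_vec R n M (vec_smult R n c v) i = vec_smult R n c (mat_vec R n M v) i"
    using i cM cv c by (simp add: mat_vec_entry vec_smult_entry finsum_rdistr cong: finsum_cong)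
qed

lemma mat_vec_zero:
  assumes M: "M \<in> mat_carrier R n"
  shows "mat_vec R n M (vec_zero R n) = vec_zero R n"
  using assms by (intro vec_eqI[of _ R n] mat_vec_closed vec_zero_closed) (auto simp: mat_vec_entry vec_zero_entry mat_carrierD finsum_zero cong: finsum_cong)

lemma unit_vec_closed: "unit_vec R n j \<in> vec_carrier R n"
  unfolding unit_vec_def vec_carrier_def by auto

lemma mat_vec_unit_vec:
  assumes M: "M \<in> mat_carrier R n" and i: "i < n" and j: "j < n"
  shows "mat_vec R n M (unit_vec R n j) i = M (i,j)"
proof -
  note cM = mat_carrierD[OF M]
  have "mat_vec R n M (unit_vec R n j) i = (\<Oplus>k\<in>{..<n}. if j = k then M(i,k) else \<zero>)"
    using i j cM by (auto simp: mat_vec_entry unit_vec_def simp_implies_def intro!: finsum_cong)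
  also have "\<dots> = M(i,j)" using i j cM by (intro finsum_singleton) auto
  finally show ?thesis .
qed

lemma mat_eqI_unit_vec:
  assumes "M \<in> mat_carrier R n" "N \<in> mat_carrier R n"
    and "\<And>j. j < n \<Longrightarrow> mat_vec R n M (unit_vec R n j) = mat_vec R n N (unit_vec R n j)"
  shows "M = N"
proof (rule mat_eqI[OF assms(1,2)])
  fix i j assume "i < n" "j < n"
  then show "M (i,j) = N (i,j)" using assms(3)[of j] mat_vec_unit_vec[OF assms(1), of i j] mat_vec_unit_vec[OF assms(2), of i j] by simp
qed

lemma mat_vec_one: "v \<in> vec_carrier R n \<Longrightarrow> mat_vec R n (mat_one R n) v = v"
proof (rule vec_eqI[OF mat_vec_closed[OF mat_one_closed]])
  fix i assume v: "v \<in> vec_carrier R n" and i: "i < n"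
  note cv = vec_carrierD[OF v]
  have "mat_vec R n (mat_one R n) v i = (\<Oplus>k\<in>{..<n}. if i = k then v k else \<zero>)"
    using i cv by (auto simp: mat_vec_entry mat_one_entry simp_implies_def intro!: finsum_cong)
  also have "\<dots> = v i" using i cv by (intro finsum_singleton) auto
  finally show "mat_vec R n (mat_one R n) v i = v i" .
qed auto

end

section \<open>Linear algebra over a field\<close>

context field
begin

lemma linear_dependence_eliminate_pivot:
  fixes m :: nat
  assumes I: "finite I" and j: "j \<in> I" and pivot: "v j m \<noteq> \<zero>"
    and v: "\<forall>i\<in>I. \<forall>k\<le>m. v i k \<in> carrier R"
    and c: "\<forall>i\<in>I-{j}. c i \<in> carrier R" "\<exists>i\<in>I-{j}. c i \<noteq> \<zero>"
    and rel: "\<forall>k<m. (\<Oplus>i\<in>I-{j}. c i \<otimes> (v i k \<ominus> (v i m \<otimes> inv (v j m)) \<otimes> v j k)) = \<zero>"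
  shows "\<exists>c'. (\<forall>i\<in>I. c' i \<in> carrier R) \<and> (\<exists>i\<in>I. c' i \<noteq> \<zero>) \<and> (\<forall>k\<le>m. (\<Oplus>i\<in>I. c' i \<otimes> v i k) = \<zero>)"
proof -
  have vc: "\<And>i k. i \<in> I \<Longrightarrow> k \<le> m \<Longrightarrow> v i k \<in> carrier R" using v by auto
  have vjm: "v j m \<in> Units R" using j pivot vc[of j m] field_Units by auto
  define t where "t i = v i m \<otimes> inv (v j m)" for i
  have tc: "\<And>i. i \<in> I \<Longrightarrow> t i \<in> carrier R" unfolding t_def using vc vjm by auto
  have t_pivot: "\<And>i. i \<in> I \<Longrightarrow> t i \<otimes> v j m = v i m"
    unfolding t_def using vc vjm by (simp add: m_assoc Units_l_inv Units_inv_closed Units_closed)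
  define S where "S = (\<Oplus>i\<in>I-{j}. c i \<otimes> t i)"
  have Sc: "S \<in> carrier R" unfolding S_def using c tc by (auto intro!: finsum_closed)
  define c' where "c' i = (if i = j then \<ominus> S else c i)" for i
  have c'c: "\<forall>i\<in>I. c' i \<in> carrier R" using c Sc by (auto simp: c'_def)
  have "(\<Oplus>i\<in>I. c' i \<otimes> v i k) = \<zero>" if k: "k \<le> m" for k
  proof -
    have vjk: "v j k \<in> carrier R" using vc j k by auto
    have reduced: "(\<Oplus>i\<in>I-{j}. c i \<otimes> (v i k \<ominus> t i \<otimes> v j k)) = \<zero>"
    proof (cases "k < m")
      case True
      then show ?thesis using rel by (simp add: t_def)
    next
      case False
      then have "k = m" using k by simp
      then have "(\<Oplus>i\<in>I-{j}. c i \<otimes> (v i k \<ominus> t i \<otimes> v j k)) = (\<Oplus>i\<in>I-{j}. \<zero>)"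
        using c vc t_pivot by (intro finsum_cong) (auto simp: r_neg minus_eq)
      then show ?thesis by simp
    qed
    have split: "(\<Oplus>i\<in>I. c' i \<otimes> v i k) = c' j \<otimes> v j k \<oplus> (\<Oplus>i\<in>I-{j}. c' i \<otimes> v i k)"
    proof -
      have "I = insert j (I - {j})" using j by auto
      then have "(\<Oplus>i\<in>I. c' i \<otimes> v i k) = (\<Oplus>i\<in>insert j (I - {j}). c' i \<otimes> v i k)" by simp
      also have "\<dots> = c' j \<otimes> v j k \<oplus> (\<Oplus>i\<in>I-{j}. c' i \<otimes> v i k)"
        using I c'c vc k j by (intro finsum_insert) auto
      finally show ?thesis .
    qed
    have term_eq: "c' i \<otimes> v i k = c i \<otimes> (v i k \<ominus> t i \<otimes> v j k) \<oplus> (c i \<otimes> t i) \<otimes> v j k"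
      if i: "i \<in> I - {j}" for i
    proof -
      have "c i \<in> carrier R" "t i \<in> carrier R" "v i k \<in> carrier R" using i c tc vc k by auto
      then show ?thesis using i vjk by (simp add: c'_def) algebra
    qed
    have "(\<Oplus>i\<in>I-{j}. c' i \<otimes> v i k)
        = (\<Oplus>i\<in>I-{j}. c i \<otimes> (v i k \<ominus> t i \<otimes> v j k) \<oplus> (c i \<otimes> t i) \<otimes> v j k)"
      using term_eq c'c vc k by (intro finsum_cong) auto
    also have "\<dots> = (\<Oplus>i\<in>I-{j}. c i \<otimes> (v i k \<ominus> t i \<otimes> v j k)) \<oplus> (\<Oplus>i\<in>I-{j}. (c i \<otimes> t i) \<otimes> v j k)"
      using c tc vc k vjk by (intro finsum_addf) auto
    also have "\<dots> = S \<otimes> v j k"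
      unfolding reduced S_def using c tc vjk I by (simp add: finsum_ldistr finsum_closed)
    finally show ?thesis
      unfolding split using Sc vjk by (simp add: c'_def) algebra
  qed
  moreover have "\<exists>i\<in>I. c' i \<noteq> \<zero>" using c(2) by (auto simp: c'_def)
  ultimately show ?thesis using c'c by blast
qed

lemma exists_linear_dependence:
  assumes "finite I" "m < card I" "\<forall>i\<in>I. \<forall>k<m. v i k \<in> carrier R"
  shows "\<exists>c. (\<forall>i\<in>I. c i \<in> carrier R) \<and> (\<exists>i\<in>I. c i \<noteq> \<zero>) \<and> (\<forall>k<m. (\<Oplus>i\<in>I. c i \<otimes> v i k) = \<zero>)"
  using assms
proof (induct m arbitrary: I v)
  case 0
  then obtain i where "i \<in> I" by (metis card.empty ex_in_conv less_irrefl)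
  then show ?case by (intro exI[of _ "\<lambda>_. \<one>"]) auto
next
  case (Suc m)
  show ?case
  proof (cases "\<forall>i\<in>I. v i m = \<zero>")
    case True
    obtain c where c: "\<forall>i\<in>I. c i \<in> carrier R" "\<exists>i\<in>I. c i \<noteq> \<zero>" "\<forall>k<m. (\<Oplus>i\<in>I. c i \<otimes> v i k) = \<zero>"
      using Suc.hyps[of I v] Suc.prems by auto
    have "(\<Oplus>i\<in>I. c i \<otimes> v i m) = \<zero>"
      using True c(1) by (simp add: finsum_zero cong: finsum_cong)
    then show ?thesis using c less_Suc_eq by auto
  next
    case False
    then obtain j where j: "j \<in> I" "v j m \<noteq> \<zero>" by auto
    have vc: "\<forall>i\<in>I. \<forall>k\<le>m. v i k \<in> carrier R" using Suc.prems by auto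
    have vjm: "inv (v j m) \<in> carrier R" using j vc field_Units by auto
    have "\<forall>i\<in>I-{j}. \<forall>k<m. v i k \<ominus> (v i m \<otimes> inv (v j m)) \<otimes> v j k \<in> carrier R"
      using vc vjm j by auto
    then have "\<exists>c. (\<forall>i\<in>I-{j}. c i \<in> carrier R) \<and> (\<exists>i\<in>I-{j}. c i \<noteq> \<zero>) \<and>
      (\<forall>k<m. (\<Oplus>i\<in>I-{j}. c i \<otimes> (v i k \<ominus> (v i m \<otimes> inv (v j m)) \<otimes> v j k)) = \<zero>)"
      using Suc.hyps[of "I-{j}"] Suc.prems(1,2) j by (simp add: card_Diff_singleton)
    then obtain c where c: "\<forall>i\<in>I-{j}. c i \<in> carrier R" "\<exists>i\<in>I-{j}. c i \<noteq> \<zero>"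
      "\<forall>k<m. (\<Oplus>i\<in>I-{j}. c i \<otimes> (v i k \<ominus> (v i m \<otimes> inv (v j m)) \<otimes> v j k)) = \<zero>"
      by blast
    show ?thesis
      using linear_dependence_eliminate_pivot[OF Suc.prems(1) j vc c] unfolding less_Suc_eq_le .
  qed
qed

end

text \<open>Polynomials are coefficient lists, constant term first: poly_mat_vec R n T p v is
  p(T) v evaluated by Horner's rule, horner R p x is p(x), and synthetic_div R x p is the
  quotient of p by X - x.\<close>
fun poly_mat_vec :: "('a,'b) ring_scheme \<Rightarrow> nat \<Rightarrow> (nat \<times> nat \<Rightarrow> 'a) \<Rightarrow> 'a list \<Rightarrow> (nat \<Rightarrow> 'a) \<Rightarrow> (nat \<Rightarrow> 'a)" where
  "poly_mat_vec R n T [] v = vec_zero R n"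
| "poly_mat_vec R n T (a # q) v = vec_add R n (vec_smult R n a v) (mat_vec R n T (poly_mat_vec R n T q v))"

fun horner :: "('a,'b) ring_scheme \<Rightarrow> 'a list \<Rightarrow> 'a \<Rightarrow> 'a" where
  "horner R [] x = \<zero>\<^bsub>R\<^esub>"
| "horner R (a # q) x = a \<oplus>\<^bsub>R\<^esub> x \<otimes>\<^bsub>R\<^esub> horner R q x"

fun synthetic_div :: "('a,'b) ring_scheme \<Rightarrow> 'a \<Rightarrow> 'a list \<Rightarrow> 'a list" where
  "synthetic_div R x [] = []"
| "synthetic_div R x [a] = []"
| "synthetic_div R x (a # b # q) = horner R (b # q) x # synthetic_div R x (b # q)"

definition algebraically_closed :: "('a,'b) ring_scheme \<Rightarrow> bool" where
  "algebraically_closed K \<longleftrightarrow> (\<forall>m::nat. m \<ge> 1 \<longrightarrow> (\<forall>c \<in> {..<m} \<rightarrow> carrier K. \<exists>x\<in>carrier K.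
      x [^]\<^bsub>K\<^esub> m \<oplus>\<^bsub>K\<^esub> (\<Oplus>\<^bsub>K\<^esub> i\<in>{..<m}. c i \<otimes>\<^bsub>K\<^esub> x [^]\<^bsub>K\<^esub> i) = \<zero>\<^bsub>K\<^esub>))"

context cring
begin

lemma horner_closed: "x \<in> carrier R \<Longrightarrow> set p \<subseteq> carrier R \<Longrightarrow> horner R p x \<in> carrier R"
  by (induct p) auto

lemma poly_mat_vec_closed: "T \<in> mat_carrier R n \<Longrightarrow> v \<in> vec_carrier R n \<Longrightarrow> set p \<subseteq> carrier R \<Longrightarrow> poly_mat_vec R n T p v \<in> vec_carrier R n"
  by (induct p) (auto intro!: vec_add_closed vec_smult_closed mat_vec_closed vec_zero_closed)

lemma synthetic_div_props:
  assumes "x \<in> carrier R" "set p \<subseteq> carrier R"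
  shows "set (synthetic_div R x p) \<subseteq> carrier R \<and> length (synthetic_div R x p) = length p - 1 \<and>
         (length p \<ge> 2 \<longrightarrow> last (synthetic_div R x p) = last p)"
  using assms
proof (induct p)
  case (Cons a p)
  show ?case
  proof (cases p)
    case Nil
    then show ?thesis by simp
  next
    case (Cons b q)
    have IH: "set (synthetic_div R x p) \<subseteq> carrier R \<and> length (synthetic_div R x p) = length p - 1 \<and>
         (length p \<ge> 2 \<longrightarrow> last (synthetic_div R x p) = last p)" using Cons.hyps Cons.prems by auto
    have h: "horner R (b # q) x \<in> carrier R" using Cons.prems \<open>p = b # q\<close> by (intro horner_closed) auto
    show ?thesis
    proof (cases q)
      case Nil
      then show ?thesis using \<open>p = b # q\<close> Cons.prems by simp
    next
      case (Cons c q')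
      then show ?thesis using IH h \<open>p = b # q\<close> by auto
    qed
  qed
qed simp

lemmas vec_closed_intros = vec_add_closed vec_smult_closed mat_vec_closed vec_zero_closed

lemma poly_mat_vec_synthetic_div:
  assumes T: "T \<in> mat_carrier R n" and v: "v \<in> vec_carrier R n" and x: "x \<in> carrier R"
  shows "set p \<subseteq> carrier R \<Longrightarrow> p \<noteq> [] \<Longrightarrow> poly_mat_vec R n T p v =
     vec_add R n (vec_add R n (mat_vec R n T (poly_mat_vec R n T (synthetic_div R x p) v))
        (vec_smult R n (\<ominus> x) (poly_mat_vec R n T (synthetic_div R x p) v))) (vec_smult R n (horner R p x) v)"
proof (induct p)
  case Nil then show ?case by simp
next
  case (Cons a p)
  have a: "a \<in> carrier R" using Cons.prems by simp
  show ?case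
  proof (cases p)
    case Nil
    show ?thesis
    proof (rule vec_eqI[of _ R n])
      fix i assume i: "i < n"
      have vi: "v i \<in> carrier R" using vec_carrierD[OF v i] .
      show "poly_mat_vec R n T (a # p) v i = vec_add R n (vec_add R n (mat_vec R n T (poly_mat_vec R n T (synthetic_div R x (a # p)) v))
        (vec_smult R n (\<ominus> x) (poly_mat_vec R n T (synthetic_div R x (a # p)) v))) (vec_smult R n (horner R (a # p) x) v) i"
        using Nil i vi a x T by (simp add: mat_entry_simps mat_vec_zero)
    qed (use Nil a x T v in \<open>auto intro!: vec_closed_intros simp: mat_vec_zero\<close>)
  next
    case (Cons b q)
    have pc: "set (b#q) \<subseteq> carrier R" using Cons.prems \<open>p = b # q\<close> by auto
    define h where "h = horner R (b#q) x"
    define w' where "w' = poly_mat_vec R n T (synthetic_div R x (b#q)) v"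
    have hc: "h \<in> carrier R" unfolding h_def using x pc by (rule horner_closed)
    have w'c: "w' \<in> vec_carrier R n" unfolding w'_def
      using T v synthetic_div_props[OF x pc] by (intro poly_mat_vec_closed) auto
    have IH: "poly_mat_vec R n T (b#q) v = vec_add R n (vec_add R n (mat_vec R n T w') (vec_smult R n (\<ominus> x) w')) (vec_smult R n h v)"
      using Cons.hyps Cons.prems \<open>p = b # q\<close> unfolding h_def w'_def by auto
    have lhs: "poly_mat_vec R n T (a # p) v = vec_add R n (vec_smult R n a v) (mat_vec R n T (poly_mat_vec R n T (b#q) v))"
      by (simp add: Cons)
    have w: "poly_mat_vec R n T (synthetic_div R x (a # p)) v = vec_add R n (vec_smult R n h v) (mat_vec R n T w')"
      by (simp add: Cons h_def w'_def)
    have hv: "horner R (a#p) x = a \<oplus> x \<otimes> h" by (simp add: Cons h_def)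
    define Tw' where "Tw' = mat_vec R n T w'"
    define TTw' where "TTw' = mat_vec R n T Tw'"
    define Tv where "Tv = mat_vec R n T v"
    have c1: "Tw' \<in> vec_carrier R n" "TTw' \<in> vec_carrier R n" "Tv \<in> vec_carrier R n"
      unfolding Tw'_def TTw'_def Tv_def using T v w'c by (auto intro!: mat_vec_closed)
    have e1: "mat_vec R n T (vec_add R n (vec_add R n Tw' (vec_smult R n (\<ominus> x) w')) (vec_smult R n h v))
       = vec_add R n (vec_add R n TTw' (vec_smult R n (\<ominus> x) Tw')) (vec_smult R n h Tv)"
      using T v w'c c1 x hc unfolding TTw'_def Tw'_def Tv_def
      by (simp add: mat_vec_add mat_vec_smult vec_closed_intros)
    have e2: "mat_vec R n T (vec_add R n (vec_smult R n h v) Tw') = vec_add R n (vec_smult R n h Tv) TTw'"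
      using T v w'c c1 x hc unfolding TTw'_def Tw'_def Tv_def
      by (simp add: mat_vec_add mat_vec_smult vec_closed_intros)
    have "poly_mat_vec R n T (a # p) v = vec_add R n (vec_smult R n a v) (vec_add R n (vec_add R n TTw' (vec_smult R n (\<ominus> x) Tw')) (vec_smult R n h Tv))"
      unfolding lhs IH using e1 by (simp add: Tw'_def)
    also have "\<dots> = vec_add R n (vec_add R n (vec_add R n (vec_smult R n h Tv) TTw')
        (vec_smult R n (\<ominus> x) (vec_add R n (vec_smult R n h v) Tw'))) (vec_smult R n (a \<oplus> x \<otimes> h) v)"
    proof (rule vec_eqI[of _ R n])
      fix i assume i: "i < n"
      have ci: "v i \<in> carrier R" "Tw' i \<in> carrier R" "TTw' i \<in> carrier R" "Tv i \<in> carrier R" "w' i \<in> carrier R"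
        using i v c1 w'c by (auto intro: vec_carrierD)
      show "vec_add R n (vec_smult R n a v) (vec_add R n (vec_add R n TTw' (vec_smult R n (\<ominus> x) Tw')) (vec_smult R n h Tv)) i =
        vec_add R n (vec_add R n (vec_add R n (vec_smult R n h Tv) TTw')
        (vec_smult R n (\<ominus> x) (vec_add R n (vec_smult R n h v) Tw'))) (vec_smult R n (a \<oplus> x \<otimes> h) v) i"
        using i ci a x hc by (simp add: mat_entry_simps) algebra
    qed (use a x hc v c1 w'c in \<open>auto intro!: vec_closed_intros\<close>)
    also have "\<dots> = vec_add R n (vec_add R n (mat_vec R n T (poly_mat_vec R n T (synthetic_div R x (a # p)) v))
        (vec_smult R n (\<ominus> x) (poly_mat_vec R n T (synthetic_div R x (a # p)) v))) (vec_smult R n (horner R (a # p) x) v)"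
      unfolding w hv Tw'_def[symmetric] e2 by (rule refl)
    finally show ?thesis .
  qed
qed

lemma finsum_lessThan_Suc_shift:
  assumes "f \<in> {..<Suc L} \<rightarrow> carrier R"
  shows "(\<Oplus>i\<in>{..<Suc L}. f i) = f 0 \<oplus> (\<Oplus>i\<in>{..<L}. f (Suc i))"
proof (cases L)
  case 0
  then show ?thesis using assms by (simp add: lessThan_Suc)
next
  case (Suc L')
  have "(\<Oplus>i\<in>{..<Suc L}. f i) = (\<Oplus>i\<in>{..Suc L'}. f i)" using Suc by (simp add: lessThan_Suc_atMost)
  also have "\<dots> = (\<Oplus>i\<in>{..L'}. f (Suc i)) \<oplus> f 0"
    using assms Suc by (intro finsum_Suc2) (auto simp: lessThan_Suc_atMost)
  also have "\<dots> = f 0 \<oplus> (\<Oplus>i\<in>{..<L}. f (Suc i))"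
    using assms Suc by (subst a_comm) (auto intro!: finsum_closed simp: lessThan_Suc_atMost)
  finally show ?thesis .
qed

lemma horner_eq_finsum:
  assumes x: "x \<in> carrier R"
  shows "set p \<subseteq> carrier R \<Longrightarrow> horner R p x = (\<Oplus>i\<in>{..<length p}. p ! i \<otimes> x [^] i)"
proof (induct p)
  case Nil then show ?case by simp
next
  case (Cons a q)
  have a: "a \<in> carrier R" and q: "set q \<subseteq> carrier R" using Cons.prems by auto
  have qi: "\<And>i. i < length q \<Longrightarrow> q ! i \<in> carrier R" using q nth_mem by blast
  have "horner R (a # q) x = a \<oplus> x \<otimes> (\<Oplus>i\<in>{..<length q}. q ! i \<otimes> x [^] i)" using Cons q by simp
  also have "\<dots> = a \<oplus> (\<Oplus>i\<in>{..<length q}. q ! i \<otimes> x [^] Suc i)"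
  proof -
    have "x \<otimes> (\<Oplus>i\<in>{..<length q}. q ! i \<otimes> x [^] i) = (\<Oplus>i\<in>{..<length q}. x \<otimes> (q ! i \<otimes> x [^] i))"
      using x qi by (intro finsum_rdistr) auto
    also have "\<dots> = (\<Oplus>i\<in>{..<length q}. q ! i \<otimes> x [^] Suc i)"
      using x qi by (intro finsum_cong) (auto simp: m_ac)
    finally show ?thesis by simp
  qed
  also have "\<dots> = (\<Oplus>i\<in>{..<Suc (length q)}. (a # q) ! i \<otimes> x [^] i)"
  proof -
    have "\<And>i. i < Suc (length q) \<Longrightarrow> (a#q)!i \<in> carrier R" using a qi by (case_tac i) auto
    then show ?thesis using x a by (subst finsum_lessThan_Suc_shift) auto
  qed
  finally show ?case by simp
qed

end

context field
begin

lemma horner_has_root: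
  assumes AC: "algebraically_closed R" and p: "set p \<subseteq> carrier R" and len: "length p \<ge> 2" and lst: "last p \<noteq> \<zero>"
  shows "\<exists>x\<in>carrier R. horner R p x = \<zero>"
proof -
  define L where "L = length p - 1"
  have L1: "L \<ge> 1" and lenL: "length p = Suc L" using len unfolding L_def by auto
  have pi: "\<And>i. i < length p \<Longrightarrow> p ! i \<in> carrier R" using p nth_mem by blast
  define a where "a = p ! L"
  have aL: "a = last p" unfolding a_def L_def using len by (subst last_conv_nth) auto
  have ac: "a \<in> carrier R" unfolding a_def using pi lenL by simp
  have au: "a \<in> Units R" using ac lst aL field_Units by auto
  define c where "c i = inv a \<otimes> p ! i" for i
  have cc: "c \<in> {..<L} \<rightarrow> carrier R" unfolding c_def using au pi lenL by auto
  obtain x where x: "x \<in> carrier R" and r: "x [^] L \<oplus> (\<Oplus>i\<in>{..<L}. c i \<otimes> x [^] i) = \<zero>"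
    using AC L1 cc unfolding algebraically_closed_def by blast
  have "horner R p x = (\<Oplus>i\<in>{..L}. p ! i \<otimes> x [^] i)" using horner_eq_finsum[OF x p] lenL by (simp add: lessThan_Suc_atMost)
  also have "\<dots> = p ! L \<otimes> x [^] L \<oplus> (\<Oplus>i\<in>{..<L}. p ! i \<otimes> x [^] i)"
    using pi lenL x by (intro add.finprod_Suc3) auto
  also have "\<dots> = a \<otimes> (x [^] L \<oplus> (\<Oplus>i\<in>{..<L}. c i \<otimes> x [^] i))"
  proof -
    have "a \<otimes> (\<Oplus>i\<in>{..<L}. c i \<otimes> x [^] i) = (\<Oplus>i\<in>{..<L}. a \<otimes> (c i \<otimes> x [^] i))"
      using cc x ac by (intro finsum_rdistr) auto
    also have "\<dots> = (\<Oplus>i\<in>{..<L}. p ! i \<otimes> x [^] i)"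
    proof -
      have "a \<otimes> (c i \<otimes> x [^] i) = p ! i \<otimes> x [^] i" if "i \<in> {..<L}" for i
      proof -
        have "p ! i \<in> carrier R" using that pi lenL by auto
        then show ?thesis
          unfolding c_def using au x by (simp add: m_assoc[symmetric] Units_r_inv Units_inv_closed Units_closed)
      qed
      then show ?thesis using pi lenL x by (intro finsum_cong) auto
    qed
    moreover have "(\<Oplus>i\<in>{..<L}. c i \<otimes> x [^] i) \<in> carrier R" using cc x by (intro finsum_closed) auto
    ultimately show ?thesis using ac x by (simp add: r_distr a_def)
  qed
  also have "\<dots> = \<zero>" using r ac by simp
  finally show ?thesis using x by blast
qed

end

context cring
begin

lemma mat_vec_iter_closed: "T \<in> mat_carrier R n \<Longrightarrow> x \<in> vec_carrier R n \<Longrightarrow> (mat_vec R n T ^^ k) x \<in> vec_carrier R n"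
  by (induct k) (auto intro: mat_vec_closed)

lemma mat_vec_iter_smult: "T \<in> mat_carrier R n \<Longrightarrow> x \<in> vec_carrier R n \<Longrightarrow> a \<in> carrier R \<Longrightarrow>
   (mat_vec R n T ^^ k) (vec_smult R n a x) = vec_smult R n a ((mat_vec R n T ^^ k) x)"
  by (induct k) (auto simp: mat_vec_smult mat_vec_iter_closed)

lemma poly_mat_vec_const: "v \<in> vec_carrier R n \<Longrightarrow> T \<in> mat_carrier R n \<Longrightarrow> a \<in> carrier R \<Longrightarrow> poly_mat_vec R n T [a] v = vec_smult R n a v"
  by (rule vec_eqI[of _ R n]) (auto simp: mat_entry_simps mat_vec_zero intro!: vec_closed_intros dest: vec_carrierD)

lemma poly_mat_vec_append:
  assumes T: "T \<in> mat_carrier R n" and v: "v \<in> vec_carrier R n" and q: "set q \<subseteq> carrier R"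
  shows "set p \<subseteq> carrier R \<Longrightarrow> poly_mat_vec R n T (p @ q) v = vec_add R n (poly_mat_vec R n T p v) ((mat_vec R n T ^^ length p) (poly_mat_vec R n T q v))"
proof (induct p)
  case Nil
  have hq: "poly_mat_vec R n T q v \<in> vec_carrier R n" using T v q by (rule poly_mat_vec_closed)
  show ?case
    by (rule vec_eqI[of _ R n]) (use hq in \<open>auto simp: mat_entry_simps intro!: vec_closed_intros dest: vec_carrierD\<close>)
next
  case (Cons a p)
  have a: "a \<in> carrier R" and pc: "set p \<subseteq> carrier R" using Cons.prems by auto
  have hq: "poly_mat_vec R n T q v \<in> vec_carrier R n" using T v q by (rule poly_mat_vec_closed)
  have hp: "poly_mat_vec R n T p v \<in> vec_carrier R n" using T v pc by (rule poly_mat_vec_closed)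
  define y where "y = (mat_vec R n T ^^ length p) (poly_mat_vec R n T q v)"
  have yc: "y \<in> vec_carrier R n" unfolding y_def using T hq by (rule mat_vec_iter_closed)
  have "poly_mat_vec R n T ((a # p) @ q) v = vec_add R n (vec_smult R n a v) (vec_add R n (mat_vec R n T (poly_mat_vec R n T p v)) (mat_vec R n T y))"
    using Cons pc T hp yc by (simp add: mat_vec_add y_def)
  also have "\<dots> = vec_add R n (vec_add R n (vec_smult R n a v) (mat_vec R n T (poly_mat_vec R n T p v))) (mat_vec R n T y)"
  proof (rule vec_eqI[of _ R n])
    fix i assume i: "i < n"
    have "v i \<in> carrier R" "mat_vec R n T (poly_mat_vec R n T p v) i \<in> carrier R" "mat_vec R n T y i \<in> carrier R"
      using i v T hp yc by (auto intro!: vec_carrierD[of _ R n] mat_vec_closed)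
    then show "vec_add R n (vec_smult R n a v) (vec_add R n (mat_vec R n T (poly_mat_vec R n T p v)) (mat_vec R n T y)) i =
      vec_add R n (vec_add R n (vec_smult R n a v) (mat_vec R n T (poly_mat_vec R n T p v))) (mat_vec R n T y) i"
      using i a by (simp add: mat_entry_simps a_assoc)
  qed (use a v T hp yc in \<open>auto intro!: vec_closed_intros\<close>)
  also have "\<dots> = vec_add R n (poly_mat_vec R n T (a # p) v) ((mat_vec R n T ^^ length (a # p)) (poly_mat_vec R n T q v))"
    by (simp add: y_def)
  finally show ?case .
qed

lemma poly_mat_vec_upt:
  assumes T: "T \<in> mat_carrier R n" and v: "v \<in> vec_carrier R n"
  shows "(\<forall>i<L. c i \<in> carrier R) \<Longrightarrow> poly_mat_vec R n T (map c [0..<L]) v =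
     (\<lambda>k\<in>{..<n}. \<Oplus>i\<in>{..<L}. c i \<otimes> (mat_vec R n T ^^ i) v k)"
proof (induct L)
  case 0
  then show ?case by (simp add: vec_zero_def)
next
  case (Suc L)
  have cL: "c L \<in> carrier R" using Suc.prems by simp
  have pc: "set (map c [0..<L]) \<subseteq> carrier R" using Suc.prems by auto
  have pwc: "\<And>i k. k < n \<Longrightarrow> (mat_vec R n T ^^ i) v k \<in> carrier R"
    using mat_vec_iter_closed[OF T v] vec_carrierD by blast
  have "poly_mat_vec R n T (map c [0..<Suc L]) v = poly_mat_vec R n T (map c [0..<L] @ [c L]) v" by simp
  also have "\<dots> = vec_add R n (poly_mat_vec R n T (map c [0..<L]) v) ((mat_vec R n T ^^ L) (vec_smult R n (c L) v))"
    using poly_mat_vec_append[OF T v _ pc] cL poly_mat_vec_const[OF v T cL] by simp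
  also have "\<dots> = vec_add R n (\<lambda>k\<in>{..<n}. \<Oplus>i\<in>{..<L}. c i \<otimes> (mat_vec R n T ^^ i) v k)
      (vec_smult R n (c L) ((mat_vec R n T ^^ L) v))"
  proof -
    have IH: "poly_mat_vec R n T (map c [0..<L]) v = (\<lambda>k\<in>{..<n}. \<Oplus>i\<in>{..<L}. c i \<otimes> (mat_vec R n T ^^ i) v k)"
      using Suc.prems by (intro Suc.hyps) auto
    show ?thesis unfolding IH mat_vec_iter_smult[OF T v cL] ..
  qed
  also have "\<dots> = (\<lambda>k\<in>{..<n}. \<Oplus>i\<in>{..<Suc L}. c i \<otimes> (mat_vec R n T ^^ i) v k)"
  proof (rule ext)
    fix k
    show "vec_add R n (\<lambda>k\<in>{..<n}. \<Oplus>i\<in>{..<L}. c i \<otimes> (mat_vec R n T ^^ i) v k)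
      (vec_smult R n (c L) ((mat_vec R n T ^^ L) v)) k = (\<lambda>k\<in>{..<n}. \<Oplus>i\<in>{..<Suc L}. c i \<otimes> (mat_vec R n T ^^ i) v k) k"
    proof (cases "k < n")
      case True
      have "(\<Oplus>i\<in>{..<Suc L}. c i \<otimes> (mat_vec R n T ^^ i) v k) = c L \<otimes> (mat_vec R n T ^^ L) v k \<oplus> (\<Oplus>i\<in>{..<L}. c i \<otimes> (mat_vec R n T ^^ i) v k)"
        unfolding lessThan_Suc using True Suc.prems pwc by (intro finsum_insert) auto
      then show ?thesis using True Suc.prems pwc cL
        by (simp add: vec_add_def vec_smult_def a_comm finsum_closed)
    next
      case False
      then show ?thesis by (simp add: vec_add_def)
    qed
  qed
  finally show ?case .
qed

end

context field
begin

text \<open>Split off a root x of p = (X - x) q: either q(T) v is an eigenvector for x, or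
  q(T) v = 0 and the shorter polynomial q annihilates v.\<close>
lemma eigenvector_of_annihilating_poly:
  assumes AC: "algebraically_closed R" and T: "T \<in> mat_carrier R n" and v: "v \<in> vec_carrier R n"
    and v0: "v \<noteq> vec_zero R n"
  shows "set p \<subseteq> carrier R \<Longrightarrow> p \<noteq> [] \<Longrightarrow> last p \<noteq> \<zero> \<Longrightarrow> poly_mat_vec R n T p v = vec_zero R n \<Longrightarrow>
    \<exists>\<mu>\<in>carrier R. \<exists>w\<in>vec_carrier R n. w \<noteq> vec_zero R n \<and> mat_vec R n T w = vec_smult R n \<mu> w"
proof (induct "length p" arbitrary: p rule: less_induct)
  case less
  show ?case
  proof (cases "length p \<ge> 2")
    case False
    obtain a q where p: "p = a # q" using less.prems(2) by (cases p) auto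
    have q: "q = []" using False p by (cases q) auto
    have a: "a \<in> carrier R" "a \<noteq> \<zero>" using less.prems p q by auto
    have "vec_smult R n a v = vec_zero R n" using poly_mat_vec_const[OF v T a(1)] less.prems p q by simp
    then have "\<And>k. k < n \<Longrightarrow> a \<otimes> v k = \<zero>" by (metis vec_smult_entry vec_zero_entry)
    then have "\<And>k. k < n \<Longrightarrow> v k = \<zero>" using a v vec_carrierD integral by blast
    then have "v = vec_zero R n" using v by (intro vec_eqI[OF v vec_zero_closed]) (simp add: vec_zero_entry)
    then show ?thesis using v0 by simp
  next
    case True
    obtain x where x: "x \<in> carrier R" "horner R p x = \<zero>" using horner_has_root[OF AC less.prems(1) True less.prems(3)] by blast
    define q where "q = synthetic_div R x p"
    have qp: "set q \<subseteq> carrier R" "length q = length p - 1" "last q = last p"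
      using synthetic_div_props[OF x(1) less.prems(1)] True unfolding q_def by auto
    have qne: "q \<noteq> []" using qp True by auto
    define w where "w = poly_mat_vec R n T q v"
    have wc: "w \<in> vec_carrier R n" unfolding w_def using T v qp by (intro poly_mat_vec_closed) auto
    have idt: "vec_add R n (vec_add R n (mat_vec R n T w) (vec_smult R n (\<ominus> x) w)) (vec_smult R n \<zero> v) = vec_zero R n"
      using poly_mat_vec_synthetic_div[OF T v x(1) less.prems(1,2)] less.prems(4) x(2) unfolding w_def q_def by simp
    have Tw: "mat_vec R n T w = vec_smult R n x w"
    proof (rule vec_eqI[OF mat_vec_closed[OF T wc] vec_smult_closed[OF x(1) wc]])
      fix k assume k: "k < n"
      have e: "(mat_vec R n T w k \<oplus> \<ominus> x \<otimes> w k) \<oplus> \<zero> \<otimes> v k = \<zero>"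
        using fun_cong[OF idt, of k] k by (simp add: mat_entry_simps)
      have c: "mat_vec R n T w k \<in> carrier R" "w k \<in> carrier R" "v k \<in> carrier R"
        using k T wc v by (auto intro!: vec_carrierD[of _ R n] mat_vec_closed)
      have "mat_vec R n T w k = x \<otimes> w k \<oplus> ((mat_vec R n T w k \<oplus> \<ominus> x \<otimes> w k) \<oplus> \<zero> \<otimes> v k)"
        using c x(1) by algebra
      then have "mat_vec R n T w k = x \<otimes> w k" using e c x(1) by simp
      then show "mat_vec R n T w k = vec_smult R n x w k" using k by (simp add: mat_entry_simps)
    qed
    show ?thesis
    proof (cases "w = vec_zero R n")
      case True
      have "length q < length p" using qp True \<open>2 \<le> length p\<close> by simp
      then show ?thesis using less.hyps[of q] qp qne less.prems(3) True w_def by simp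
    next
      case False
      then show ?thesis using x(1) wc Tw by blast
    qed
  qed
qed

lemma exists_annihilating_poly:
  assumes T: "T \<in> mat_carrier R n" and v: "v \<in> vec_carrier R n"
  shows "\<exists>p. set p \<subseteq> carrier R \<and> p \<noteq> [] \<and> last p \<noteq> \<zero> \<and> poly_mat_vec R n T p v = vec_zero R n"
proof -
  define pw where "pw i = (mat_vec R n T ^^ i) v" for i
  have pwc: "\<And>i k. k < n \<Longrightarrow> pw i k \<in> carrier R"
    unfolding pw_def using mat_vec_iter_closed[OF T v] vec_carrierD by blast
  obtain c where c: "\<forall>i\<in>{..n}. c i \<in> carrier R" "\<exists>i\<in>{..n}. c i \<noteq> \<zero>"
     "\<forall>k<n. (\<Oplus>i\<in>{..n}. c i \<otimes> pw i k) = \<zero>"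
    using exists_linear_dependence[of "{..n}" n pw] pwc by auto
  define S where "S = {i\<in>{..n}. c i \<noteq> \<zero>}"
  have S: "finite S" "S \<noteq> {}" using c(2) unfolding S_def by auto
  define d where "d = Max S"
  have d: "d \<in> S" unfolding d_def using S by (rule Max_in)
  have above_degree: "c i = \<zero>" if "i \<in> {..n}" "i > d" for i
  proof (rule ccontr)
    assume "c i \<noteq> \<zero>"
    then have "i \<le> d" using that Max_ge[OF S(1), of i] unfolding S_def d_def by blast
    then show False using that by simp
  qed
  define p where "p = map c [0..<Suc d]"
  have cc: "\<forall>i<Suc d. c i \<in> carrier R" using c(1) d unfolding S_def by auto
  have "poly_mat_vec R n T p v = (\<lambda>k\<in>{..<n}. \<Oplus>i\<in>{..<Suc d}. c i \<otimes> pw i k)"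
    unfolding p_def pw_def using poly_mat_vec_upt[OF T v cc] by simp
  also have "\<dots> = vec_zero R n"
    unfolding vec_zero_def
  proof (rule restrict_ext)
    fix k assume k: "k \<in> {..<n}"
    have "(\<Oplus>i\<in>{..<Suc d}. c i \<otimes> pw i k) = (\<Oplus>i\<in>{..n}. c i \<otimes> pw i k)"
    proof (rule add.finprod_mono_neutral_cong_left)
      show "{..<Suc d} \<subseteq> {..n}" using d unfolding S_def by auto
      show "\<And>i. i \<in> {..n} - {..<Suc d} \<Longrightarrow> c i \<otimes> pw i k = \<zero>" using above_degree pwc k by auto
      show "(\<lambda>i. c i \<otimes> pw i k) \<in> {..n} \<rightarrow> carrier R" using c(1) pwc k by auto
    qed auto
    then show "(\<Oplus>i\<in>{..<Suc d}. c i \<otimes> pw i k) = \<zero>" using c(3) k by simp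
  qed
  finally have "poly_mat_vec R n T p v = vec_zero R n" .
  moreover have "set p \<subseteq> carrier R" "p \<noteq> []" "last p \<noteq> \<zero>"
    unfolding p_def using cc d unfolding S_def by auto
  ultimately show ?thesis by blast
qed

lemma eigenvector_exists:
  assumes AC: "algebraically_closed R" and T: "T \<in> mat_carrier R n" and n: "n > 0"
  shows "\<exists>\<mu>\<in>carrier R. \<exists>w\<in>vec_carrier R n. w \<noteq> vec_zero R n \<and> mat_vec R n T w = vec_smult R n \<mu> w"
proof -
  have v: "unit_vec R n 0 \<in> vec_carrier R n" by (rule unit_vec_closed)
  have "unit_vec R n 0 0 \<noteq> vec_zero R n 0" using n by (simp add: unit_vec_def vec_zero_def)
  then have v0: "unit_vec R n 0 \<noteq> vec_zero R n" by metis
  obtain p where "set p \<subseteq> carrier R" "p \<noteq> []" "last p \<noteq> \<zero>"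
    "poly_mat_vec R n T p (unit_vec R n 0) = vec_zero R n"
    using exists_annihilating_poly[OF T v] by blast
  then show ?thesis using eigenvector_of_annihilating_poly[OF AC T v v0] by blast
qed

end

context cring
begin

lemma eigenspace_invariant:
  assumes T: "T \<in> mat_carrier R n" and \<mu>: "\<mu> \<in> carrier R"
    and \<rho>: "\<forall>h\<in>H. \<rho> h \<in> mat_carrier R n"
    and comm: "\<forall>h\<in>H. mat_mul R n T (\<rho> h) = mat_mul R n (\<rho> h) T"
  defines "S \<equiv> {u \<in> vec_carrier R n. mat_vec R n T u = vec_smult R n \<mu> u}"
  shows "vec_zero R n \<in> S"
    and "\<forall>u\<in>S. \<forall>u'\<in>S. vec_add R n u u' \<in> S"
    and "\<forall>c\<in>carrier R. \<forall>u\<in>S. vec_smult R n c u \<in> S"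
    and "\<forall>h\<in>H. \<forall>u\<in>S. mat_vec R n (\<rho> h) u \<in> S"
proof -
  show "vec_zero R n \<in> S" unfolding S_def
    using T \<mu> by (auto simp: mat_vec_zero vec_zero_closed mat_entry_simps intro!: vec_eqI[of _ R n] vec_smult_closed)
  show "\<forall>u\<in>S. \<forall>u'\<in>S. vec_add R n u u' \<in> S"
  proof (intro ballI)
    fix u u' assume "u \<in> S" "u' \<in> S"
    then have uc: "u \<in> vec_carrier R n" "u' \<in> vec_carrier R n"
      and e: "mat_vec R n T u = vec_smult R n \<mu> u" "mat_vec R n T u' = vec_smult R n \<mu> u'"
      unfolding S_def by auto
    have "mat_vec R n T (vec_add R n u u') = vec_smult R n \<mu> (vec_add R n u u')"
      unfolding mat_vec_add[OF T uc] e
      using uc \<mu> by (intro vec_eqI[of _ R n]) (auto simp: mat_entry_simps r_distr vec_carrierD intro!: vec_closed_intros)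
    then show "vec_add R n u u' \<in> S" unfolding S_def using uc by (auto intro: vec_add_closed)
  qed
  show "\<forall>c\<in>carrier R. \<forall>u\<in>S. vec_smult R n c u \<in> S"
  proof (intro ballI)
    fix c u assume c: "c \<in> carrier R" and "u \<in> S"
    then have uc: "u \<in> vec_carrier R n" and e: "mat_vec R n T u = vec_smult R n \<mu> u"
      unfolding S_def by auto
    have "mat_vec R n T (vec_smult R n c u) = vec_smult R n \<mu> (vec_smult R n c u)"
      unfolding mat_vec_smult[OF T c uc] e
      using uc \<mu> c by (intro vec_eqI[of _ R n]) (auto simp: mat_entry_simps m_lcomm vec_carrierD intro!: vec_closed_intros)
    then show "vec_smult R n c u \<in> S" unfolding S_def using uc c by (auto intro: vec_smult_closed)
  qed
  show "\<forall>h\<in>H. \<forall>u\<in>S. mat_vec R n (\<rho> h) u \<in> S"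
  proof (intro ballI)
    fix h u assume h: "h \<in> H" and "u \<in> S"
    then have uc: "u \<in> vec_carrier R n" and e: "mat_vec R n T u = vec_smult R n \<mu> u"
      unfolding S_def by auto
    have \<rho>h: "\<rho> h \<in> mat_carrier R n" using \<rho> h by auto
    have "mat_vec R n T (mat_vec R n (\<rho> h) u) = mat_vec R n (mat_mul R n T (\<rho> h)) u"
      using mat_vec_mul[OF T \<rho>h uc] by simp
    also have "\<dots> = mat_vec R n (\<rho> h) (mat_vec R n T u)" using comm h mat_vec_mul[OF \<rho>h T uc] by simp
    also have "\<dots> = vec_smult R n \<mu> (mat_vec R n (\<rho> h) u)" unfolding e using mat_vec_smult[OF \<rho>h \<mu> uc] .
    finally show "mat_vec R n (\<rho> h) u \<in> S" unfolding S_def using \<rho>h uc by (auto intro: mat_vec_closed)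
  qed
qed

end

lemma schur_lemma:
  fixes K :: "'k ring"
  assumes K: "field K" "algebraically_closed K"
    and irr: "irreducible_rep K n H \<rho>" and \<rho>: "\<forall>h\<in>H. \<rho> h \<in> mat_carrier K n"
    and T: "T \<in> mat_carrier K n" and comm: "\<forall>h\<in>H. mat_mul K n T (\<rho> h) = mat_mul K n (\<rho> h) T"
  shows "\<exists>\<mu>\<in>carrier K. T = mat_smult K n \<mu> (mat_one K n)"
proof -
  interpret field K by (rule K(1))
  have "n > 0" using irr unfolding irreducible_rep_def by simp
  then obtain \<mu> w where \<mu>: "\<mu> \<in> carrier K" and w: "w \<in> vec_carrier K n" "w \<noteq> vec_zero K n"
    "mat_vec K n T w = vec_smult K n \<mu> w"
    using eigenvector_exists[OF K(2) T] by blast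
  define S where "S = {u \<in> vec_carrier K n. mat_vec K n T u = vec_smult K n \<mu> u}"
  have "S \<subseteq> vec_carrier K n" unfolding S_def by auto
  then have "S = {vec_zero K n} \<or> S = vec_carrier K n"
    using irr eigenspace_invariant[OF T \<mu> \<rho> comm] unfolding irreducible_rep_def S_def by blast
  moreover have "w \<in> S" using w unfolding S_def by auto
  ultimately have S: "S = vec_carrier K n" using w(2) by auto
  show ?thesis
  proof (intro bexI[OF _ \<mu>] mat_eqI[OF T mat_smult_closed[OF \<mu> mat_one_closed]])
    fix i j assume ij: "i < n" "j < n"
    have "unit_vec K n j \<in> S" using S unit_vec_closed by auto
    then have "mat_vec K n T (unit_vec K n j) i = vec_smult K n \<mu> (unit_vec K n j) i"
      unfolding S_def by auto
    then show "T (i,j) = mat_smult K n \<mu> (mat_one K n) (i,j)"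
      using mat_vec_unit_vec[OF T ij] ij \<mu> by (auto simp: mat_entry_simps unit_vec_def)
  qed
qed

context cring
begin

lemma mat_mul_scalar_left:
  assumes "c \<in> carrier R" "N \<in> mat_carrier R n"
  shows "mat_mul R n (mat_smult R n c (mat_one R n)) N = mat_smult R n c N"
  using mat_smult_mul_left[OF assms(1) mat_one_closed assms(2)] mat_one_left[OF assms(2)] by simp

lemma mat_mul_scalar_right:
  assumes "c \<in> carrier R" "N \<in> mat_carrier R n"
  shows "mat_mul R n N (mat_smult R n c (mat_one R n)) = mat_smult R n c N"
  using mat_smult_mul_right[OF assms(1) assms(2) mat_one_closed] mat_one_right[OF assms(2)] by simp

lemma finsum_in_ideal:
  assumes I: "ideal I R" and "finite B" and "\<And>k. k \<in> B \<Longrightarrow> f k \<in> I"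
  shows "(\<Oplus>k\<in>B. f k) \<in> I"
  using assms(2,3)
proof (induct B rule: finite_induct)
  case empty
  then show ?case using additive_subgroup.zero_closed[OF ideal.axioms(1)[OF I]] by simp
next
  case (insert x F)
  have "(\<Oplus>k\<in>insert x F. f k) = f x \<oplus> (\<Oplus>k\<in>F. f k)"
    using insert ideal.Icarr[OF I] by (intro finsum_insert) auto
  then show ?case using insert additive_subgroup.a_closed[OF ideal.axioms(1)[OF I]] by simp
qed

lemma mat_mul_in_ideal:
  assumes I: "ideal I R" and Y: "\<forall>i<n. \<forall>j<n. Y (i,j) \<in> I" and N: "N \<in> mat_carrier R n"
    and ij: "i < n" "j < n"
  shows "mat_mul R n Y N (i,j) \<in> I" "mat_mul R n N Y (i,j) \<in> I"
  unfolding mat_mul_entry[OF ij] using Y ij mat_carrierD[OF N]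
  by (auto intro!: finsum_in_ideal[OF I] intro: ideal.I_r_closed[OF I] ideal.I_l_closed[OF I])

end

section \<open>The local ring A and its residue field\<close>

lemma local_ringD:
  assumes "local_ring A"
  shows "cring A" "ideal (max_ideal A) A"
  using assms unfolding local_ring_def by auto

lemma one_notin_max_ideal:
  assumes "local_ring A"
  shows "\<one>\<^bsub>A\<^esub> \<notin> max_ideal A"
proof -
  interpret cring A using local_ringD[OF assms] by simp
  show ?thesis unfolding max_ideal_def by simp
qed

lemma local_ring_maximalideal:
  assumes loc: "local_ring A"
  shows "maximalideal (max_ideal A) A"
proof -
  interpret cring A using local_ringD[OF loc] by simp
  show ?thesis
  proof (intro maximalideal.intro local_ringD(2)[OF loc] maximalideal_axioms.intro)
    show "carrier A \<noteq> max_ideal A" using one_notin_max_ideal[OF loc] by auto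
    fix J assume J: "ideal J A" "max_ideal A \<subseteq> J" "J \<subseteq> carrier A"
    show "J = max_ideal A \<or> J = carrier A"
    proof (cases "J \<inter> Units A = {}")
      case True
      then have "J \<subseteq> max_ideal A" using J unfolding max_ideal_def by auto
      then show ?thesis using J by auto
    next
      case False
      then obtain u where u: "u \<in> J" "u \<in> Units A" by auto
      have "\<one>\<^bsub>A\<^esub> \<in> J" using ideal.I_l_closed[OF J(1) u(1), of "inv\<^bsub>A\<^esub> u"] u(2) by simp
      then show ?thesis using ideal.one_imp_carrier[OF J(1)] by auto
    qed
  qed
qed

lemma residue_field:
  assumes "local_ring A"
  shows "field (A Quot max_ideal A)"
  by (rule maximalideal.quotient_is_field[OF local_ring_maximalideal[OF assms] local_ringD(1)[OF assms]])

lemma carrier_FactRing_iff: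
  "X \<in> carrier (A Quot I) \<longleftrightarrow> (\<exists>a\<in>carrier A. X = I +>\<^bsub>A\<^esub> a)"
  by (auto simp: FactRing_def A_RCOSETS_def' RCOSETS_def)

lemma ring_hom_Units:
  assumes "ring_hom_cring R S h" "x \<in> Units R"
  shows "h x \<in> Units S"
proof -
  interpret ring_hom_cring R S h by fact
  have x: "x \<in> carrier R" "inv\<^bsub>R\<^esub> x \<in> carrier R" using assms(2) by auto
  have "h x \<otimes>\<^bsub>S\<^esub> h (inv\<^bsub>R\<^esub> x) = \<one>\<^bsub>S\<^esub>" "h (inv\<^bsub>R\<^esub> x) \<otimes>\<^bsub>S\<^esub> h x = \<one>\<^bsub>S\<^esub>"
    using assms(2) x by (simp_all flip: hom_mult)
  then show ?thesis using x unfolding Units_def by auto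
qed

lemma ring_hom_cring_of_ring_hom:
  assumes "cring R" "cring S" "h \<in> ring_hom R S"
  shows "ring_hom_cring R S h"
  using assms by (intro ring_hom_cringI ring_hom_ringI2) (auto simp: cring_def)

lemma witt_FbarD:
  assumes "witt_Fbar W l"
  defines "p \<equiv> add_pow W l \<one>\<^bsub>W\<^esub>"
  shows "domain W" "p \<in> carrier W" "p \<notin> Units W"
    and "\<forall>x\<in>carrier W - {\<zero>\<^bsub>W\<^esub>}. \<exists>u\<in>Units W. \<exists>k::nat. x = u \<otimes>\<^bsub>W\<^esub> p [^]\<^bsub>W\<^esub> k"
    and "\<forall>m::nat. m \<ge> 1 \<longrightarrow> (\<forall>c\<in>{..<m} \<rightarrow> carrier W. \<exists>x\<in>carrier W. \<exists>d\<in>carrier W.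
           x [^]\<^bsub>W\<^esub> m \<oplus>\<^bsub>W\<^esub> (\<Oplus>\<^bsub>W\<^esub> i\<in>{..<m}. c i \<otimes>\<^bsub>W\<^esub> x [^]\<^bsub>W\<^esub> i) = p \<otimes>\<^bsub>W\<^esub> d)"
proof -
  show "domain W" using assms unfolding witt_Fbar_def by simp
  then interpret domain W .
  show "p \<in> carrier W" unfolding p_def by simp
  show "p \<notin> Units W"
    and "\<forall>x\<in>carrier W - {\<zero>\<^bsub>W\<^esub>}. \<exists>u\<in>Units W. \<exists>k::nat. x = u \<otimes>\<^bsub>W\<^esub> p [^]\<^bsub>W\<^esub> k"
    and "\<forall>m::nat. m \<ge> 1 \<longrightarrow> (\<forall>c\<in>{..<m} \<rightarrow> carrier W. \<exists>x\<in>carrier W. \<exists>d\<in>carrier W.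
           x [^]\<^bsub>W\<^esub> m \<oplus>\<^bsub>W\<^esub> (\<Oplus>\<^bsub>W\<^esub> i\<in>{..<m}. c i \<otimes>\<^bsub>W\<^esub> x [^]\<^bsub>W\<^esub> i) = p \<otimes>\<^bsub>W\<^esub> d)"
    using assms unfolding witt_Fbar_def Let_def p_def by auto
qed

lemma (in domain) one_minus_mult_Units:
  assumes p: "p \<in> carrier R" "p \<notin> Units R"
    and factor: "\<forall>x\<in>carrier R - {\<zero>}. \<exists>u\<in>Units R. \<exists>k::nat. x = u \<otimes> p [^] k"
    and w: "w \<in> carrier R"
  shows "\<one> \<ominus> p \<otimes> w \<in> Units R"
proof -
  have not_inverse: "p \<otimes> q \<noteq> \<one>" if "q \<in> carrier R" for q
    using p that m_comm unfolding Units_def by force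
  define z where "z = \<one> \<ominus> p \<otimes> w"
  have z: "z \<in> carrier R" unfolding z_def using p w by simp
  have one: "\<one> = z \<oplus> p \<otimes> w" unfolding z_def using p w by algebra
  have "z \<noteq> \<zero>" using not_inverse[OF w] one p w by auto
  then obtain u k where u: "u \<in> Units R" and zu: "z = u \<otimes> p [^] (k::nat)" using factor z by blast
  have uc: "u \<in> carrier R" using u by blast
  show ?thesis
  proof (cases k)
    case 0
    then show ?thesis using u zu z_def by simp
  next
    case (Suc k')
    have pk: "p [^] k' \<in> carrier R" using p by simp
    have "\<one> = u \<otimes> (p [^] k' \<otimes> p) \<oplus> p \<otimes> w" unfolding one zu Suc by simp
    also have "\<dots> = p \<otimes> (w \<oplus> u \<otimes> p [^] k')" using p w uc pk by algebra
    finally have "\<one> = p \<otimes> (w \<oplus> u \<otimes> p [^] k')" .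
    then show ?thesis using not_inverse[of "w \<oplus> u \<otimes> p [^] k'"] w uc pk by simp
  qed
qed

text \<open>If phi(l) were a unit, lifting its inverse to some phi(w) would put phi(1 - l w) into
  the maximal ideal, although 1 - l w is a unit of the discrete valuation ring W.\<close>
lemma witt_char_in_max_ideal:
  assumes W: "witt_Fbar W l" and A: "fin_length_local_W_alg W A \<phi>"
  shows "\<phi> (add_pow W l \<one>\<^bsub>W\<^esub>) \<in> max_ideal A"
proof (rule ccontr)
  define p where "p = add_pow W l \<one>\<^bsub>W\<^esub>"
  note WD = witt_FbarD[OF W, folded p_def]
  interpret W: domain W by (rule WD(1))
  have loc: "local_ring A" and hom: "\<phi> \<in> ring_hom W A"
    and res: "\<forall>a\<in>carrier A. \<exists>w\<in>carrier W. a \<ominus>\<^bsub>A\<^esub> \<phi> w \<in> max_ideal A"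
    using A unfolding fin_length_local_W_alg_def by auto
  interpret A: cring A by (rule local_ringD(1)[OF loc])
  interpret h: ring_hom_cring W A \<phi>
    by (rule ring_hom_cring_of_ring_hom[OF W.cring_axioms A.cring_axioms hom])
  assume "\<phi> (add_pow W l \<one>\<^bsub>W\<^esub>) \<notin> max_ideal A"
  then have \<phi>p: "\<phi> p \<in> Units A" using WD(2) unfolding p_def max_ideal_def by auto
  obtain w where w: "w \<in> carrier W" "inv\<^bsub>A\<^esub> (\<phi> p) \<ominus>\<^bsub>A\<^esub> \<phi> w \<in> max_ideal A"
    using res \<phi>p by blast
  have "\<phi> (\<one>\<^bsub>W\<^esub> \<ominus>\<^bsub>W\<^esub> p \<otimes>\<^bsub>W\<^esub> w) = \<phi> p \<otimes>\<^bsub>A\<^esub> (inv\<^bsub>A\<^esub> (\<phi> p) \<ominus>\<^bsub>A\<^esub> \<phi> w)"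
    using \<phi>p WD(2) w(1) by (simp add: W.minus_eq A.minus_eq A.r_distr A.r_minus)
  also have "\<dots> \<in> max_ideal A"
    using ideal.I_l_closed[OF local_ringD(2)[OF loc] w(2)] WD(2) by simp
  finally have "\<phi> (\<one>\<^bsub>W\<^esub> \<ominus>\<^bsub>W\<^esub> p \<otimes>\<^bsub>W\<^esub> w) \<in> max_ideal A" .
  moreover have "\<phi> (\<one>\<^bsub>W\<^esub> \<ominus>\<^bsub>W\<^esub> p \<otimes>\<^bsub>W\<^esub> w) \<in> Units A"
    using ring_hom_Units[OF h.ring_hom_cring_axioms W.one_minus_mult_Units[OF WD(2-4) w(1)]] .
  ultimately show False unfolding max_ideal_def by simp
qed

lemma residue_lift:
  assumes A: "fin_length_local_W_alg W A \<phi>" and X: "X \<in> carrier (A Quot max_ideal A)"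
  shows "\<exists>w\<in>carrier W. X = max_ideal A +>\<^bsub>A\<^esub> \<phi> w"
proof -
  have loc: "local_ring A" and hom: "\<phi> \<in> ring_hom W A"
    and res: "\<forall>a\<in>carrier A. \<exists>w\<in>carrier W. a \<ominus>\<^bsub>A\<^esub> \<phi> w \<in> max_ideal A"
    using A unfolding fin_length_local_W_alg_def by auto
  interpret A: cring A by (rule local_ringD(1)[OF loc])
  obtain a where a: "a \<in> carrier A" "X = max_ideal A +>\<^bsub>A\<^esub> a"
    using X unfolding carrier_FactRing_iff by blast
  obtain w where w: "w \<in> carrier W" "a \<ominus>\<^bsub>A\<^esub> \<phi> w \<in> max_ideal A" using res a(1) by blast
  have "max_ideal A +>\<^bsub>A\<^esub> a = max_ideal A +>\<^bsub>A\<^esub> \<phi> w"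
    using A.quotient_eq_iff_same_a_r_cos[OF local_ringD(2)[OF loc] a(1) ring_hom_closed[OF hom w(1)]] w(2)
    by simp
  then show ?thesis using a(2) w(1) by blast
qed

lemma residue_field_algebraically_closed:
  assumes W: "witt_Fbar W l" and A: "fin_length_local_W_alg W A \<phi>"
  shows "algebraically_closed (A Quot max_ideal A)"
proof -
  define p where "p = add_pow W l \<one>\<^bsub>W\<^esub>"
  define K where "K = A Quot max_ideal A"
  note WD = witt_FbarD[OF W, folded p_def]
  interpret W: domain W by (rule WD(1))
  have loc: "local_ring A" and hom: "\<phi> \<in> ring_hom W A"
    using A unfolding fin_length_local_W_alg_def by auto
  interpret K: field K unfolding K_def by (rule residue_field[OF loc])
  define \<psi> where "\<psi> = (+>\<^bsub>A\<^esub>) (max_ideal A) \<circ> \<phi>"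
  have \<psi>_hom: "\<psi> \<in> ring_hom W K" unfolding \<psi>_def K_def
    by (rule ring_hom_trans[OF hom ideal.rcos_ring_hom[OF local_ringD(2)[OF loc]]])
  interpret \<psi>: ring_hom_cring W K \<psi>
    by (rule ring_hom_cring_of_ring_hom[OF W.cring_axioms K.cring_axioms \<psi>_hom])
  have \<psi>p: "\<psi> p = \<zero>\<^bsub>K\<^esub>"
    using ring.a_rcos_zero[OF cring.axioms(1)[OF local_ringD(1)[OF loc]] local_ringD(2)[OF loc]
        witt_char_in_max_ideal[OF W A]]
    unfolding \<psi>_def K_def p_def by (simp add: FactRing_def)
  show ?thesis unfolding algebraically_closed_def K_def[symmetric]
  proof (intro allI impI ballI)
    fix m :: nat and c assume m: "m \<ge> 1" and c: "c \<in> {..<m} \<rightarrow> carrier K"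
    have "\<forall>i\<in>{..<m}. \<exists>w\<in>carrier W. c i = \<psi> w"
      using residue_lift[OF A] c unfolding K_def \<psi>_def by fastforce
    then obtain f where "\<forall>i\<in>{..<m}. f i \<in> carrier W \<and> c i = \<psi> (f i)"
      by metis
    then have f: "f \<in> {..<m} \<rightarrow> carrier W" "\<And>i. i < m \<Longrightarrow> c i = \<psi> (f i)" by auto
    obtain x d where x: "x \<in> carrier W" "d \<in> carrier W"
      "x [^]\<^bsub>W\<^esub> m \<oplus>\<^bsub>W\<^esub> (\<Oplus>\<^bsub>W\<^esub> i\<in>{..<m}. f i \<otimes>\<^bsub>W\<^esub> x [^]\<^bsub>W\<^esub> i) = p \<otimes>\<^bsub>W\<^esub> d"
      using WD(5) m f(1) by blast
    have "\<psi> x [^]\<^bsub>K\<^esub> m \<oplus>\<^bsub>K\<^esub> (\<Oplus>\<^bsub>K\<^esub> i\<in>{..<m}. c i \<otimes>\<^bsub>K\<^esub> \<psi> x [^]\<^bsub>K\<^esub> i)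
        = \<psi> (x [^]\<^bsub>W\<^esub> m \<oplus>\<^bsub>W\<^esub> (\<Oplus>\<^bsub>W\<^esub> i\<in>{..<m}. f i \<otimes>\<^bsub>W\<^esub> x [^]\<^bsub>W\<^esub> i))"
      using f x(1) ring_hom_ring.hom_nat_pow[OF ring_hom_ringI2[OF W.ring_axioms K.ring_axioms \<psi>_hom] x(1)]
      by (simp add: Pi_def cong: K.finsum_cong)
    also have "\<dots> = \<zero>\<^bsub>K\<^esub>" using x \<psi>p WD(2) by simp
    finally show "\<exists>x\<in>carrier K. x [^]\<^bsub>K\<^esub> m \<oplus>\<^bsub>K\<^esub> (\<Oplus>\<^bsub>K\<^esub> i\<in>{..<m}. c i \<otimes>\<^bsub>K\<^esub> x [^]\<^bsub>K\<^esub> i) = \<zero>\<^bsub>K\<^esub>"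
      using x(1) by blast
  qed
qed

definition mat_cong_mod :: "('a,'b) ring_scheme \<Rightarrow> nat \<Rightarrow> 'a set \<Rightarrow> (nat \<times> nat \<Rightarrow> 'a) \<Rightarrow> (nat \<times> nat \<Rightarrow> 'a) \<Rightarrow> bool" where
  "mat_cong_mod R n I M N \<longleftrightarrow> (\<forall>i<n. \<forall>j<n. M (i,j) \<ominus>\<^bsub>R\<^esub> N (i,j) \<in> I)"

definition commutes_mod :: "('a,'b) ring_scheme \<Rightarrow> nat \<Rightarrow> 'g set \<Rightarrow> ('g \<Rightarrow> nat \<times> nat \<Rightarrow> 'a) \<Rightarrow> 'a set \<Rightarrow> (nat \<times> nat \<Rightarrow> 'a) \<Rightarrow> bool" where
  "commutes_mod R n H \<rho> I M \<longleftrightarrow> (\<forall>h\<in>H. mat_cong_mod R n I (mat_mul R n M (\<rho> h)) (mat_mul R n (\<rho> h) M))"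

definition scalar_mod :: "('a,'b) ring_scheme \<Rightarrow> nat \<Rightarrow> 'a set \<Rightarrow> (nat \<times> nat \<Rightarrow> 'a) \<Rightarrow> bool" where
  "scalar_mod R n I M \<longleftrightarrow> (\<exists>c\<in>carrier R. mat_cong_mod R n I M (mat_smult R n c (mat_one R n)))"

lemma (in cring) mat_cong_mod_zero_iff:
  assumes M: "M \<in> mat_carrier R n" and N: "N \<in> mat_carrier R n"
  shows "mat_cong_mod R n {\<zero>} M N \<longleftrightarrow> M = N"
proof
  assume cong: "mat_cong_mod R n {\<zero>} M N"
  show "M = N"
  proof (rule mat_eqI[OF M N])
    fix i j assume ij: "i < n" "j < n"
    have "M (i,j) = (M (i,j) \<ominus> N (i,j)) \<oplus> N (i,j)"
      using mat_carrierD[OF M ij] mat_carrierD[OF N ij] by algebra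
    then show "M (i,j) = N (i,j)"
      using cong ij mat_carrierD[OF N ij] unfolding mat_cong_mod_def by simp
  qed
qed (use N in \<open>auto simp: mat_cong_mod_def mat_carrierD minus_eq r_neg\<close>)

lemma reduce_mat_closed:
  assumes "local_ring A" "M \<in> mat_carrier A n"
  shows "reduce_mat A n M \<in> mat_carrier (A Quot max_ideal A) n"
  unfolding reduce_mat_def mat_carrier_def
  using ring_hom_closed[OF ideal.rcos_ring_hom[OF local_ringD(2)[OF assms(1)]]] mat_carrierD[OF assms(2)]
  by auto

lemma reduce_mat_mul:
  assumes loc: "local_ring A" and M: "M \<in> mat_carrier A n" and N: "N \<in> mat_carrier A n"
  shows "reduce_mat A n (mat_mul A n M N) = mat_mul (A Quot max_ideal A) n (reduce_mat A n M) (reduce_mat A n N)"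
proof -
  interpret A: cring A by (rule local_ringD(1)[OF loc])
  interpret K: field "A Quot max_ideal A" by (rule residue_field[OF loc])
  interpret \<pi>: ring_hom_cring A "A Quot max_ideal A" "(+>\<^bsub>A\<^esub>) (max_ideal A)"
    by (rule ideal.rcos_ring_hom_cring[OF local_ringD(2)[OF loc] A.cring_axioms])
  show ?thesis
  proof (rule mat_eqI)
    fix i j assume ij: "i < n" "j < n"
    note cM = mat_carrierD[OF M] and cN = mat_carrierD[OF N]
    have "reduce_mat A n (mat_mul A n M N) (i,j)
        = max_ideal A +>\<^bsub>A\<^esub> (\<Oplus>\<^bsub>A\<^esub> k\<in>{..<n}. M (i,k) \<otimes>\<^bsub>A\<^esub> N (k,j))"
      using ij by (simp add: reduce_mat_def mat_mul_entry)
    also have "\<dots> = (\<Oplus>\<^bsub>A Quot max_ideal A\<^esub> k\<in>{..<n}.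
        ((+>\<^bsub>A\<^esub>) (max_ideal A) \<circ> (\<lambda>k. M (i,k) \<otimes>\<^bsub>A\<^esub> N (k,j))) k)"
      using ij cM cN by (intro \<pi>.hom_finsum) auto
    also have "\<dots> = (\<Oplus>\<^bsub>A Quot max_ideal A\<^esub> k\<in>{..<n}.
        (max_ideal A +>\<^bsub>A\<^esub> M (i,k)) \<otimes>\<^bsub>A Quot max_ideal A\<^esub> (max_ideal A +>\<^bsub>A\<^esub> N (k,j)))"
      using ij cM cN by (intro K.finsum_cong) (auto intro!: K.m_closed \<pi>.hom_closed simp: simp_implies_def)
    also have "\<dots> = mat_mul (A Quot max_ideal A) n (reduce_mat A n M) (reduce_mat A n N) (i,j)"
      unfolding mat_mul_entry[OF ij] using ij cM cN
      by (intro K.finsum_cong) (auto intro!: K.m_closed \<pi>.hom_closed simp: reduce_mat_def)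
    finally show "reduce_mat A n (mat_mul A n M N) (i,j)
        = mat_mul (A Quot max_ideal A) n (reduce_mat A n M) (reduce_mat A n N) (i,j)" .
  qed (use loc M N in \<open>auto intro: reduce_mat_closed K.mat_mul_closed A.mat_mul_closed\<close>)
qed

lemma reduce_mat_eq_iff:
  assumes loc: "local_ring A" and M: "M \<in> mat_carrier A n" and N: "N \<in> mat_carrier A n"
  shows "reduce_mat A n M = reduce_mat A n N \<longleftrightarrow> mat_cong_mod A n (max_ideal A) M N"
proof -
  interpret A: cring A by (rule local_ringD(1)[OF loc])
  have entry: "max_ideal A +>\<^bsub>A\<^esub> M (i,j) = max_ideal A +>\<^bsub>A\<^esub> N (i,j) \<longleftrightarrow>
      M (i,j) \<ominus>\<^bsub>A\<^esub> N (i,j) \<in> max_ideal A" if "i < n" "j < n" for i j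
    using A.quotient_eq_iff_same_a_r_cos[OF local_ringD(2)[OF loc]] mat_carrierD[OF M that] mat_carrierD[OF N that]
    by simp
  show ?thesis
  proof
    assume eq: "reduce_mat A n M = reduce_mat A n N"
    show "mat_cong_mod A n (max_ideal A) M N" unfolding mat_cong_mod_def
    proof (intro allI impI)
      fix i j assume ij: "i < n" "j < n"
      have "reduce_mat A n M (i,j) = reduce_mat A n N (i,j)" by (simp add: eq)
      then show "M (i,j) \<ominus>\<^bsub>A\<^esub> N (i,j) \<in> max_ideal A"
        using entry[OF ij] ij by (simp add: reduce_mat_def)
    qed
  next
    assume "mat_cong_mod A n (max_ideal A) M N"
    then show "reduce_mat A n M = reduce_mat A n N"
      unfolding mat_cong_mod_def reduce_mat_def using entry by (intro restrict_ext) auto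
  qed
qed

lemma W_finite_length_ideal_chain_bound:
  assumes "W_finite_length W A \<phi>" "\<phi> \<in> ring_hom W A"
  obtains N where "\<And>f k. (\<forall>i\<le>k. ideal (f i) A) \<Longrightarrow> (\<forall>i<k. f i \<subset> f (Suc i)) \<Longrightarrow> k \<le> N"
proof -
  have submodule: "W_submodule W A \<phi> I" if "ideal I A" for I
    unfolding W_submodule_def using that assms(2)
    by (auto intro: ideal.Icarr additive_subgroup.zero_closed[OF ideal.axioms(1)]
        additive_subgroup.a_closed[OF ideal.axioms(1)] ideal.I_l_closed ring_hom_closed)
  obtain N where N: "\<forall>M k.
      (\<forall>i\<le>k. W_submodule W A \<phi> (M i)) \<and> (\<forall>i<k. M i \<subset> M (Suc i)) \<longrightarrow> k \<le> N"
    using assms(1) unfolding W_finite_length_def by blast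
  show ?thesis
  proof (rule that)
    fix f k assume "\<forall>i\<le>k. ideal (f i) A" "\<forall>i<k. f i \<subset> f (Suc i)"
    then show "k \<le> N" using N[rule_format, of k f] submodule by blast
  qed
qed

lemma W_finite_length_wf_ideal_supset:
  assumes "W_finite_length W A \<phi>" "\<phi> \<in> ring_hom W A"
  shows "wf {(X,Y). ideal X A \<and> ideal Y A \<and> Y \<subset> X}"
  unfolding wf_iff_no_infinite_down_chain
proof
  obtain N where N: "\<And>f k. (\<forall>i\<le>k. ideal (f i) A) \<Longrightarrow> (\<forall>i<k. f i \<subset> f (Suc i)) \<Longrightarrow> k \<le> N"
    using W_finite_length_ideal_chain_bound[OF assms] by blast
  assume "\<exists>f. \<forall>i. (f (Suc i), f i) \<in> {(X,Y). ideal X A \<and> ideal Y A \<and> Y \<subset> X}"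
  then obtain f where "\<And>i. ideal (f i) A" "\<And>i. f i \<subset> f (Suc i)" by blast
  then have "Suc N \<le> N" using N[where f=f and k="Suc N"] by blast
  then show False by simp
qed

lemma W_finite_length_wf_ideal_subset:
  assumes "W_finite_length W A \<phi>" "\<phi> \<in> ring_hom W A"
  shows "wf {(X,Y). ideal X A \<and> ideal Y A \<and> X \<subset> Y}"
  unfolding wf_iff_no_infinite_down_chain
proof
  obtain N where N: "\<And>f k. (\<forall>i\<le>k. ideal (f i) A) \<Longrightarrow> (\<forall>i<k. f i \<subset> f (Suc i)) \<Longrightarrow> k \<le> N"
    using W_finite_length_ideal_chain_bound[OF assms] by blast
  assume "\<exists>f. \<forall>i. (f (Suc i), f i) \<in> {(X,Y). ideal X A \<and> ideal Y A \<and> X \<subset> Y}"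
  then obtain f where f: "\<And>i. ideal (f i) A" "\<And>i. f (Suc i) \<subset> f i" by blast
  have "\<forall>i<Suc N. f (Suc N - i) \<subset> f (Suc N - Suc i)"
    using f(2) by (metis Suc_diff_Suc)
  then have "Suc N \<le> N" using f(1) N[where f="\<lambda>i. f (Suc N - i)" and k="Suc N"] by blast
  then show False by simp
qed

section \<open>Schur's lemma over A\<close>

lemma reduce_mat_scalar:
  assumes loc: "local_ring A" and c: "c \<in> carrier A"
  shows "reduce_mat A n (mat_smult A n c (mat_one A n))
       = mat_smult (A Quot max_ideal A) n (max_ideal A +>\<^bsub>A\<^esub> c) (mat_one (A Quot max_ideal A) n)"
proof -
  interpret A: cring A by (rule local_ringD(1)[OF loc])
  interpret K: field "A Quot max_ideal A" by (rule residue_field[OF loc])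
  interpret \<pi>: ring_hom_cring A "A Quot max_ideal A" "(+>\<^bsub>A\<^esub>) (max_ideal A)"
    by (rule ideal.rcos_ring_hom_cring[OF local_ringD(2)[OF loc] A.cring_axioms])
  show ?thesis
    by (rule mat_eqI[OF reduce_mat_closed[OF loc A.mat_smult_closed[OF c A.mat_one_closed]]
          K.mat_smult_closed[OF \<pi>.hom_closed[OF c] K.mat_one_closed]])
      (use c in \<open>simp add: reduce_mat_def mat_entry_simps\<close>)
qed

lemma scalar_mod_max_ideal:
  assumes loc: "local_ring A" and AC: "algebraically_closed (A Quot max_ideal A)"
    and irr: "residually_irreducible A n H \<eta>" and \<eta>: "\<forall>h\<in>H. \<eta> h \<in> mat_carrier A n"
    and M: "M \<in> mat_carrier A n" and comm: "commutes_mod A n H \<eta> (max_ideal A) M"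
  shows "scalar_mod A n (max_ideal A) M"
proof -
  define K where "K = A Quot max_ideal A"
  interpret A: cring A by (rule local_ringD(1)[OF loc])
  have K: "field K" unfolding K_def by (rule residue_field[OF loc])
  have "mat_mul K n (reduce_mat A n M) (reduce_mat A n (\<eta> h))
      = mat_mul K n (reduce_mat A n (\<eta> h)) (reduce_mat A n M)" if h: "h \<in> H" for h
    using comm h \<eta> M reduce_mat_eq_iff[OF loc A.mat_mul_closed A.mat_mul_closed]
    unfolding commutes_mod_def K_def by (simp flip: reduce_mat_mul[OF loc])
  then obtain \<mu> where \<mu>: "\<mu> \<in> carrier K" "reduce_mat A n M = mat_smult K n \<mu> (mat_one K n)"
    using schur_lemma[OF K AC[folded K_def] irr[unfolded residually_irreducible_def, folded K_def]]
      reduce_mat_closed[OF loc] \<eta> M unfolding K_def by blast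
  obtain c where c: "c \<in> carrier A" "\<mu> = max_ideal A +>\<^bsub>A\<^esub> c"
    using \<mu>(1) unfolding K_def carrier_FactRing_iff by blast
  have "reduce_mat A n M = reduce_mat A n (mat_smult A n c (mat_one A n))"
    using \<mu>(2) reduce_mat_scalar[OF loc c(1)] c(2) unfolding K_def by simp
  then show ?thesis
    using reduce_mat_eq_iff[OF loc M A.mat_smult_closed[OF c(1) A.mat_one_closed]] c(1)
    unfolding scalar_mod_def by blast
qed

lemma (in cring) ideal_add_mult:
  assumes J: "ideal J R" and L: "ideal L R" and a: "a \<in> carrier R"
  shows "ideal {x. \<exists>j\<in>J. \<exists>y\<in>L. x = j \<oplus> a \<otimes> y} R"
proof (rule idealI)
  have Jc: "\<And>j. j \<in> J \<Longrightarrow> j \<in> carrier R" and Lc: "\<And>y. y \<in> L \<Longrightarrow> y \<in> carrier R"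
    using ideal.Icarr[OF J] ideal.Icarr[OF L] by auto
  note J_add = additive_subgroup.a_closed[OF ideal.axioms(1)[OF J]]
    and L_add = additive_subgroup.a_closed[OF ideal.axioms(1)[OF L]]
    and J_inv = additive_subgroup.a_inv_closed[OF ideal.axioms(1)[OF J]]
    and L_inv = additive_subgroup.a_inv_closed[OF ideal.axioms(1)[OF L]]
  show "ring R" by (rule ring_axioms)
  show "subgroup {x. \<exists>j\<in>J. \<exists>y\<in>L. x = j \<oplus> a \<otimes> y} (add_monoid R)"
  proof (rule add.subgroupI)
    show "{x. \<exists>j\<in>J. \<exists>y\<in>L. x = j \<oplus> a \<otimes> y} \<subseteq> carrier R" using Jc Lc a by auto
    show "{x. \<exists>j\<in>J. \<exists>y\<in>L. x = j \<oplus> a \<otimes> y} \<noteq> {}"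
      using additive_subgroup.zero_closed[OF ideal.axioms(1)[OF J]]
        additive_subgroup.zero_closed[OF ideal.axioms(1)[OF L]] by blast
  next
    fix x assume "x \<in> {x. \<exists>j\<in>J. \<exists>y\<in>L. x = j \<oplus> a \<otimes> y}"
    then obtain j y where jy: "j \<in> J" "y \<in> L" "x = j \<oplus> a \<otimes> y" by auto
    have "\<ominus> x = (\<ominus> j) \<oplus> a \<otimes> (\<ominus> y)" using jy Jc Lc a by simp algebra
    then show "\<ominus> x \<in> {x. \<exists>j\<in>J. \<exists>y\<in>L. x = j \<oplus> a \<otimes> y}" using jy J_inv L_inv by blast
  next
    fix x x' assume "x \<in> {x. \<exists>j\<in>J. \<exists>y\<in>L. x = j \<oplus> a \<otimes> y}" "x' \<in> {x. \<exists>j\<in>J. \<exists>y\<in>L. x = j \<oplus> a \<otimes> y}"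
    then obtain j y j' y' where jy: "j \<in> J" "y \<in> L" "x = j \<oplus> a \<otimes> y" "j' \<in> J" "y' \<in> L" "x' = j' \<oplus> a \<otimes> y'"
      by auto
    have "x \<oplus> x' = (j \<oplus> j') \<oplus> a \<otimes> (y \<oplus> y')" using jy Jc Lc a by simp algebra
    then show "x \<oplus> x' \<in> {x. \<exists>j\<in>J. \<exists>y\<in>L. x = j \<oplus> a \<otimes> y}" using jy J_add L_add by blast
  qed
next
  fix x r assume "x \<in> {x. \<exists>j\<in>J. \<exists>y\<in>L. x = j \<oplus> a \<otimes> y}" and r: "r \<in> carrier R"
  then obtain j y where jy: "j \<in> J" "y \<in> L" "x = j \<oplus> a \<otimes> y" by auto
  have jyc: "j \<in> carrier R" "y \<in> carrier R" using jy ideal.Icarr[OF J] ideal.Icarr[OF L] by auto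
  have "r \<otimes> x = (r \<otimes> j) \<oplus> a \<otimes> (r \<otimes> y)" "x \<otimes> r = (r \<otimes> j) \<oplus> a \<otimes> (r \<otimes> y)"
    using jy(3) jyc a r by (simp, algebra)+
  moreover have "r \<otimes> j \<in> J" "r \<otimes> y \<in> L" using jy r ideal.I_l_closed[OF J] ideal.I_l_closed[OF L] by auto
  ultimately show "r \<otimes> x \<in> {x. \<exists>j\<in>J. \<exists>y\<in>L. x = j \<oplus> a \<otimes> y}" "x \<otimes> r \<in> {x. \<exists>j\<in>J. \<exists>y\<in>L. x = j \<oplus> a \<otimes> y}"
    by blast+
qed

lemma (in cring) unit_factor_in_ideal:
  assumes "ideal J R" "a \<in> carrier R" "u \<in> Units R" "a \<otimes> u \<in> J"
  shows "a \<in> J"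
proof -
  have "(a \<otimes> u) \<otimes> inv u = a" using assms(2,3) by (simp add: m_assoc Units_closed)
  then show ?thesis using ideal.I_r_closed[OF assms(1,4), of "inv u"] assms(3) by simp
qed

lemma (in cring) minimal_overideal_eq:
  assumes J: "ideal J R" and I: "ideal I R" and JI: "J \<subseteq> I"
    and minimal: "\<And>Y. ideal Y R \<Longrightarrow> J \<subset> Y \<Longrightarrow> Y \<subseteq> I \<Longrightarrow> Y = I"
    and a: "a \<in> I" and L: "ideal L R" and y: "y \<in> L" "a \<otimes> y \<notin> J"
  shows "I = {x. \<exists>j\<in>J. \<exists>y\<in>L. x = j \<oplus> a \<otimes> y}"
proof (rule minimal[symmetric])
  have ac: "a \<in> carrier R" using ideal.Icarr[OF I a] .
  show "ideal {x. \<exists>j\<in>J. \<exists>y\<in>L. x = j \<oplus> a \<otimes> y} R" by (rule ideal_add_mult[OF J L ac])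
  have "J \<subseteq> {x. \<exists>j\<in>J. \<exists>y\<in>L. x = j \<oplus> a \<otimes> y}"
    using additive_subgroup.zero_closed[OF ideal.axioms(1)[OF L]] ac ideal.Icarr[OF J] by force
  moreover have "a \<otimes> y \<in> {x. \<exists>j\<in>J. \<exists>y\<in>L. x = j \<oplus> a \<otimes> y}"
    using additive_subgroup.zero_closed[OF ideal.axioms(1)[OF J]] y(1) ac ideal.Icarr[OF L] by force
  ultimately show "J \<subset> {x. \<exists>j\<in>J. \<exists>y\<in>L. x = j \<oplus> a \<otimes> y}" using y(2) by blast
  show "{x. \<exists>j\<in>J. \<exists>y\<in>L. x = j \<oplus> a \<otimes> y} \<subseteq> I"
  proof
    fix x assume "x \<in> {x. \<exists>j\<in>J. \<exists>y\<in>L. x = j \<oplus> a \<otimes> y}"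
    then obtain j y' where "j \<in> J" "y' \<in> L" "x = j \<oplus> a \<otimes> y'" by blast
    then show "x \<in> I"
      using JI ideal.I_r_closed[OF I a] ideal.Icarr[OF L] additive_subgroup.a_closed[OF ideal.axioms(1)[OF I]]
      by blast
  qed
qed

text \<open>The last conclusion says that multiplication by a identifies the residue field
  with I/J.\<close>
lemma exists_simple_ideal_extension:
  assumes loc: "local_ring A" and wf: "wf {(X,Y). ideal X A \<and> ideal Y A \<and> X \<subset> Y}"
    and J: "ideal J A" "J \<noteq> carrier A"
  obtains I a where "ideal I A" "J \<subset> I" "a \<in> carrier A"
    "I = {x. \<exists>j\<in>J. \<exists>y\<in>carrier A. x = j \<oplus>\<^bsub>A\<^esub> a \<otimes>\<^bsub>A\<^esub> y}"
    "\<And>z. z \<in> carrier A \<Longrightarrow> a \<otimes>\<^bsub>A\<^esub> z \<in> J \<longleftrightarrow> z \<in> max_ideal A"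
proof -
  interpret A: cring A by (rule local_ringD(1)[OF loc])
  have m: "ideal (max_ideal A) A" by (rule local_ringD(2)[OF loc])
  have "carrier A \<in> {X. ideal X A \<and> J \<subset> X}" using A.oneideal ideal.Icarr[OF J(1)] J(2) by auto
  then obtain I where I: "ideal I A" "J \<subset> I"
    and minimal: "\<And>Y. ideal Y A \<Longrightarrow> J \<subset> Y \<Longrightarrow> Y \<subseteq> I \<Longrightarrow> Y = I"
    by (rule wfE_min[OF wf]) blast
  obtain a where a: "a \<in> I" "a \<notin> J" using I(2) by auto
  have ac: "a \<in> carrier A" using ideal.Icarr[OF I(1) a(1)] .
  have generated: "I = {x. \<exists>j\<in>J. \<exists>y\<in>carrier A. x = j \<oplus>\<^bsub>A\<^esub> a \<otimes>\<^bsub>A\<^esub> y}"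
    using A.minimal_overideal_eq[OF J(1) I(1) psubset_imp_subset[OF I(2)] minimal a(1) A.oneideal A.one_closed] a(2) ac by simp
  have annihilates: "a \<otimes>\<^bsub>A\<^esub> y \<in> J" if y: "y \<in> max_ideal A" for y
  proof (rule ccontr)
    assume "a \<otimes>\<^bsub>A\<^esub> y \<notin> J"
    then have "a \<in> {x. \<exists>j\<in>J. \<exists>y\<in>max_ideal A. x = j \<oplus>\<^bsub>A\<^esub> a \<otimes>\<^bsub>A\<^esub> y}"
      using A.minimal_overideal_eq[OF J(1) I(1) psubset_imp_subset[OF I(2)] minimal a(1) m y] a(1) by simp
    then obtain j y' where jy: "j \<in> J" "y' \<in> max_ideal A" "a = j \<oplus>\<^bsub>A\<^esub> a \<otimes>\<^bsub>A\<^esub> y'" by blast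
    have jc: "j \<in> carrier A" and y'c: "y' \<in> carrier A" using jy ideal.Icarr[OF J(1)] ideal.Icarr[OF m] by auto
    have "a \<otimes>\<^bsub>A\<^esub> (\<one>\<^bsub>A\<^esub> \<ominus>\<^bsub>A\<^esub> y') = a \<ominus>\<^bsub>A\<^esub> a \<otimes>\<^bsub>A\<^esub> y'"
      using ac y'c by algebra
    also have "\<dots> = (j \<oplus>\<^bsub>A\<^esub> a \<otimes>\<^bsub>A\<^esub> y') \<ominus>\<^bsub>A\<^esub> a \<otimes>\<^bsub>A\<^esub> y'"
      using jy(3) by simp
    also have "\<dots> = j" using jc ac y'c by algebra
    finally have "a \<otimes>\<^bsub>A\<^esub> (\<one>\<^bsub>A\<^esub> \<ominus>\<^bsub>A\<^esub> y') \<in> J" using jy(1) by simp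
    moreover have "\<one>\<^bsub>A\<^esub> \<ominus>\<^bsub>A\<^esub> y' \<in> Units A"
    proof -
      have "(\<one>\<^bsub>A\<^esub> \<ominus>\<^bsub>A\<^esub> y') \<oplus>\<^bsub>A\<^esub> y' = \<one>\<^bsub>A\<^esub>" using y'c by algebra
      then have "\<one>\<^bsub>A\<^esub> \<ominus>\<^bsub>A\<^esub> y' \<notin> max_ideal A"
        using one_notin_max_ideal[OF loc] jy(2) additive_subgroup.a_closed[OF ideal.axioms(1)[OF m]] by metis
      then show ?thesis using y'c unfolding max_ideal_def by auto
    qed
    ultimately show False using A.unit_factor_in_ideal[OF J(1) ac] a(2) by blast
  qed
  have cancel: "a \<otimes>\<^bsub>A\<^esub> z \<in> J \<longleftrightarrow> z \<in> max_ideal A" if z: "z \<in> carrier A" for z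
  proof
    assume "a \<otimes>\<^bsub>A\<^esub> z \<in> J"
    then have "z \<notin> Units A" using A.unit_factor_in_ideal[OF J(1) ac] a(2) by blast
    then show "z \<in> max_ideal A" using z unfolding max_ideal_def by simp
  qed (rule annihilates)
  show ?thesis by (rule that[OF I(1,2) ac generated cancel])
qed

context cring
begin

lemma ideal_minus: "ideal J R \<Longrightarrow> x \<in> J \<Longrightarrow> y \<in> J \<Longrightarrow> x \<ominus> y \<in> J"
  unfolding minus_eq
  by (intro additive_subgroup.a_closed[OF ideal.axioms(1)] additive_subgroup.a_inv_closed[OF ideal.axioms(1)])

lemma mat_mul_entry_decomp_left:
  assumes M: "M \<in> mat_carrier R n" and X: "X \<in> mat_carrier R n" and Y: "Y \<in> mat_carrier R n"
    and Z: "Z \<in> mat_carrier R n" and N: "N \<in> mat_carrier R n" and a: "a \<in> carrier R"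
    and e: "\<forall>i<n. \<forall>j<n. M (i,j) = X (i,j) \<oplus> Y (i,j) \<oplus> a \<otimes> Z (i,j)"
    and ij: "i < n" "j < n"
  shows "mat_mul R n M N (i,j) = mat_mul R n X N (i,j) \<oplus> mat_mul R n Y N (i,j) \<oplus> a \<otimes> mat_mul R n Z N (i,j)"
proof -
  note cX = mat_carrierD[OF X] and cY = mat_carrierD[OF Y] and cZ = mat_carrierD[OF Z] and cN = mat_carrierD[OF N]
  have eqk: "M (i,k) \<otimes> N (k,j) = (X (i,k) \<otimes> N (k,j) \<oplus> Y (i,k) \<otimes> N (k,j)) \<oplus> a \<otimes> (Z (i,k) \<otimes> N (k,j))" if "k \<in> {..<n}" for k
  proof -
    have "X (i,k) \<in> carrier R" "Y (i,k) \<in> carrier R" "Z (i,k) \<in> carrier R" "N (k,j) \<in> carrier R"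
      using that cX cY cZ cN ij by auto
    then show ?thesis using e that ij a by simp algebra
  qed
  have "mat_mul R n M N (i,j) = (\<Oplus>k\<in>{..<n}. (X (i,k) \<otimes> N (k,j) \<oplus> Y (i,k) \<otimes> N (k,j)) \<oplus> a \<otimes> (Z (i,k) \<otimes> N (k,j)))"
    unfolding mat_mul_entry[OF ij] using eqk cX cY cZ cN ij a by (intro finsum_cong) auto
  also have "\<dots> = (\<Oplus>k\<in>{..<n}. X (i,k) \<otimes> N (k,j) \<oplus> Y (i,k) \<otimes> N (k,j)) \<oplus> (\<Oplus>k\<in>{..<n}. a \<otimes> (Z (i,k) \<otimes> N (k,j)))"
    using cX cY cZ cN ij a by (intro finsum_addf) auto
  also have "\<dots> = (\<Oplus>k\<in>{..<n}. X (i,k) \<otimes> N (k,j)) \<oplus> (\<Oplus>k\<in>{..<n}. Y (i,k) \<otimes> N (k,j)) \<oplus> a \<otimes> (\<Oplus>k\<in>{..<n}. Z (i,k) \<otimes> N (k,j))"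
    using cX cY cZ cN ij a by (simp add: finsum_addf finsum_rdistr)
  finally show ?thesis using ij by (simp add: mat_mul_entry)
qed

lemma mat_mul_entry_decomp_right:
  assumes M: "M \<in> mat_carrier R n" and X: "X \<in> mat_carrier R n" and Y: "Y \<in> mat_carrier R n"
    and Z: "Z \<in> mat_carrier R n" and N: "N \<in> mat_carrier R n" and a: "a \<in> carrier R"
    and e: "\<forall>i<n. \<forall>j<n. M (i,j) = X (i,j) \<oplus> Y (i,j) \<oplus> a \<otimes> Z (i,j)"
    and ij: "i < n" "j < n"
  shows "mat_mul R n N M (i,j) = mat_mul R n N X (i,j) \<oplus> mat_mul R n N Y (i,j) \<oplus> a \<otimes> mat_mul R n N Z (i,j)"
proof -
  note cX = mat_carrierD[OF X] and cY = mat_carrierD[OF Y] and cZ = mat_carrierD[OF Z] and cN = mat_carrierD[OF N]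
  have eqk: "N (i,k) \<otimes> M (k,j) = (N (i,k) \<otimes> X (k,j) \<oplus> N (i,k) \<otimes> Y (k,j)) \<oplus> a \<otimes> (N (i,k) \<otimes> Z (k,j))" if "k \<in> {..<n}" for k
  proof -
    have "X (k,j) \<in> carrier R" "Y (k,j) \<in> carrier R" "Z (k,j) \<in> carrier R" "N (i,k) \<in> carrier R"
      using that cX cY cZ cN ij by auto
    then show ?thesis using e that ij a by simp algebra
  qed
  have "mat_mul R n N M (i,j) = (\<Oplus>k\<in>{..<n}. (N (i,k) \<otimes> X (k,j) \<oplus> N (i,k) \<otimes> Y (k,j)) \<oplus> a \<otimes> (N (i,k) \<otimes> Z (k,j)))"
    unfolding mat_mul_entry[OF ij] using eqk cX cY cZ cN ij a by (intro finsum_cong) auto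
  also have "\<dots> = (\<Oplus>k\<in>{..<n}. N (i,k) \<otimes> X (k,j) \<oplus> N (i,k) \<otimes> Y (k,j)) \<oplus> (\<Oplus>k\<in>{..<n}. a \<otimes> (N (i,k) \<otimes> Z (k,j)))"
    using cX cY cZ cN ij a by (intro finsum_addf) auto
  also have "\<dots> = (\<Oplus>k\<in>{..<n}. N (i,k) \<otimes> X (k,j)) \<oplus> (\<Oplus>k\<in>{..<n}. N (i,k) \<otimes> Y (k,j)) \<oplus> a \<otimes> (\<Oplus>k\<in>{..<n}. N (i,k) \<otimes> Z (k,j))"
    using cX cY cZ cN ij a by (simp add: finsum_addf finsum_rdistr)
  finally show ?thesis using ij by (simp add: mat_mul_entry)
qed


lemma mat_cong_mod_decompose:
  assumes J: "ideal J R" and a: "a \<in> carrier R"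
    and M: "M \<in> mat_carrier R n" and X: "X \<in> mat_carrier R n"
    and cong: "mat_cong_mod R n {x. \<exists>j\<in>J. \<exists>y\<in>carrier R. x = j \<oplus> a \<otimes> y} M X"
  obtains Y Z where "Y \<in> mat_carrier R n" "Z \<in> mat_carrier R n" "\<forall>i<n. \<forall>j<n. Y (i,j) \<in> J"
    "\<forall>i<n. \<forall>j<n. M (i,j) = X (i,j) \<oplus> Y (i,j) \<oplus> a \<otimes> Z (i,j)"
proof -
  have "\<forall>p\<in>{..<n}\<times>{..<n}. \<exists>q. fst q \<in> J \<and> snd q \<in> carrier R \<and> M p \<ominus> X p = fst q \<oplus> a \<otimes> snd q"
    using cong unfolding mat_cong_mod_def by fastforce
  then obtain f where f: "\<forall>p\<in>{..<n}\<times>{..<n}. fst (f p) \<in> J \<and> snd (f p) \<in> carrier R \<and>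
      M p \<ominus> X p = fst (f p) \<oplus> a \<otimes> snd (f p)"
    by metis
  define Y where "Y = (\<lambda>p\<in>{..<n}\<times>{..<n}. fst (f p))"
  define Z where "Z = (\<lambda>p\<in>{..<n}\<times>{..<n}. snd (f p))"
  have Y: "Y \<in> mat_carrier R n" "\<forall>i<n. \<forall>j<n. Y (i,j) \<in> J"
    unfolding Y_def mat_carrier_def using f ideal.Icarr[OF J] by auto
  have Z: "Z \<in> mat_carrier R n" unfolding Z_def mat_carrier_def using f by auto
  have "M (i,j) = X (i,j) \<oplus> Y (i,j) \<oplus> a \<otimes> Z (i,j)" if ij: "i < n" "j < n" for i j
  proof -
    have "M (i,j) = X (i,j) \<oplus> (M (i,j) \<ominus> X (i,j))"
      using mat_carrierD[OF M ij] mat_carrierD[OF X ij] by algebra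
    also have "M (i,j) \<ominus> X (i,j) = Y (i,j) \<oplus> a \<otimes> Z (i,j)"
      using f ij unfolding Y_def Z_def by auto
    finally show ?thesis
      using mat_carrierD[OF X ij] mat_carrierD[OF Y(1) ij] mat_carrierD[OF Z ij] a by (simp add: a_assoc)
  qed
  then have "\<forall>i<n. \<forall>j<n. M (i,j) = X (i,j) \<oplus> Y (i,j) \<oplus> a \<otimes> Z (i,j)" by blast
  then show ?thesis by (rule that[OF Y(1) Z Y(2)])
qed

lemma commutes_mod_cancel:
  assumes J: "ideal J R" and a: "a \<in> carrier R" and \<eta>: "\<forall>h\<in>H. \<eta> h \<in> mat_carrier R n"
    and c: "c \<in> carrier R" and M: "M \<in> mat_carrier R n"
    and Y: "Y \<in> mat_carrier R n" "\<forall>i<n. \<forall>j<n. Y (i,j) \<in> J" and Z: "Z \<in> mat_carrier R n"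
    and decomp: "\<forall>i<n. \<forall>j<n. M (i,j) = mat_smult R n c (mat_one R n) (i,j) \<oplus> Y (i,j) \<oplus> a \<otimes> Z (i,j)"
    and comm: "commutes_mod R n H \<eta> J M"
    and cancel: "\<And>z. z \<in> carrier R \<Longrightarrow> a \<otimes> z \<in> J \<Longrightarrow> z \<in> K"
  shows "commutes_mod R n H \<eta> K Z"
  unfolding commutes_mod_def mat_cong_mod_def
proof (intro ballI allI impI)
  fix h i j assume h: "h \<in> H" and ij: "i < n" "j < n"
  define X where "X = mat_smult R n c (mat_one R n)"
  have \<eta>h: "\<eta> h \<in> mat_carrier R n" using \<eta> h by auto
  have X: "X \<in> mat_carrier R n" unfolding X_def using c by (intro mat_smult_closed mat_one_closed)
  define x where "x = mat_mul R n X (\<eta> h) (i,j)"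
  define y1 where "y1 = mat_mul R n Y (\<eta> h) (i,j)"
  define y2 where "y2 = mat_mul R n (\<eta> h) Y (i,j)"
  define z1 where "z1 = mat_mul R n Z (\<eta> h) (i,j)"
  define z2 where "z2 = mat_mul R n (\<eta> h) Z (i,j)"
  have x2: "mat_mul R n (\<eta> h) X (i,j) = x"
    unfolding x_def X_def using mat_mul_scalar_left[OF c \<eta>h] mat_mul_scalar_right[OF c \<eta>h] by simp
  have left: "mat_mul R n M (\<eta> h) (i,j) = x \<oplus> y1 \<oplus> a \<otimes> z1"
    using mat_mul_entry_decomp_left[OF M X Y(1) Z \<eta>h a decomp[folded X_def] ij]
    unfolding x_def y1_def z1_def .
  have right: "mat_mul R n (\<eta> h) M (i,j) = x \<oplus> y2 \<oplus> a \<otimes> z2"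
    using mat_mul_entry_decomp_right[OF M X Y(1) Z \<eta>h a decomp[folded X_def] ij] x2
    unfolding y2_def z2_def by simp
  have yJ: "y1 \<in> J" "y2 \<in> J" unfolding y1_def y2_def using mat_mul_in_ideal[OF J Y(2) \<eta>h ij] by auto
  have carr: "x \<in> carrier R" "y1 \<in> carrier R" "y2 \<in> carrier R" "z1 \<in> carrier R" "z2 \<in> carrier R"
    unfolding x_def y1_def y2_def z1_def z2_def using X Y(1) Z \<eta>h ij
    by (auto intro!: mat_carrierD[of _ R n] mat_mul_closed)
  have "mat_mul R n M (\<eta> h) (i,j) \<ominus> mat_mul R n (\<eta> h) M (i,j) \<in> J"
    using comm h ij unfolding commutes_mod_def mat_cong_mod_def by blast
  then have D: "(x \<oplus> y1 \<oplus> a \<otimes> z1) \<ominus> (x \<oplus> y2 \<oplus> a \<otimes> z2) \<in> J"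
    unfolding left right .
  have "a \<otimes> (z1 \<ominus> z2) = ((x \<oplus> y1 \<oplus> a \<otimes> z1) \<ominus> (x \<oplus> y2 \<oplus> a \<otimes> z2)) \<ominus> (y1 \<ominus> y2)"
    using carr a by algebra
  also have "\<dots> \<in> J" using ideal_minus[OF J D ideal_minus[OF J yJ]] .
  finally have "a \<otimes> (z1 \<ominus> z2) \<in> J" .
  then show "mat_mul R n Z (\<eta> h) (i,j) \<ominus> mat_mul R n (\<eta> h) Z (i,j) \<in> K"
    using cancel carr unfolding z1_def z2_def by simp
qed

end

lemma scalar_mod_descend:
  assumes loc: "local_ring A" and AC: "algebraically_closed (A Quot max_ideal A)"
    and irr: "residually_irreducible A n H \<eta>" and \<eta>: "\<forall>h\<in>H. \<eta> h \<in> mat_carrier A n"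
    and J: "ideal J A" and a: "a \<in> carrier A"
    and cancel: "\<And>z. z \<in> carrier A \<Longrightarrow> a \<otimes>\<^bsub>A\<^esub> z \<in> J \<longleftrightarrow> z \<in> max_ideal A"
    and M: "M \<in> mat_carrier A n" and comm: "commutes_mod A n H \<eta> J M"
    and coarse: "scalar_mod A n {x. \<exists>j\<in>J. \<exists>y\<in>carrier A. x = j \<oplus>\<^bsub>A\<^esub> a \<otimes>\<^bsub>A\<^esub> y} M"
  shows "scalar_mod A n J M"
proof -
  interpret A: cring A by (rule local_ringD(1)[OF loc])
  obtain c where c: "c \<in> carrier A"
    and cong: "mat_cong_mod A n {x. \<exists>j\<in>J. \<exists>y\<in>carrier A. x = j \<oplus>\<^bsub>A\<^esub> a \<otimes>\<^bsub>A\<^esub> y} M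
      (mat_smult A n c (mat_one A n))"
    using coarse unfolding scalar_mod_def by blast
  obtain Y Z where Y: "Y \<in> mat_carrier A n" and Z: "Z \<in> mat_carrier A n"
    and YJ: "\<forall>i<n. \<forall>j<n. Y (i,j) \<in> J"
    and decomp: "\<forall>i<n. \<forall>j<n. M (i,j) = mat_smult A n c (mat_one A n) (i,j) \<oplus>\<^bsub>A\<^esub> Y (i,j) \<oplus>\<^bsub>A\<^esub> a \<otimes>\<^bsub>A\<^esub> Z (i,j)"
    by (rule A.mat_cong_mod_decompose[OF J a M A.mat_smult_closed[OF c A.mat_one_closed] cong])
  have "commutes_mod A n H \<eta> (max_ideal A) Z"
    by (rule A.commutes_mod_cancel[OF J a \<eta> c M Y YJ Z decomp comm]) (use cancel in blast)
  then obtain \<mu> where \<mu>: "\<mu> \<in> carrier A" "mat_cong_mod A n (max_ideal A) Z (mat_smult A n \<mu> (mat_one A n))"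
    using scalar_mod_max_ideal[OF loc AC irr \<eta> Z] unfolding scalar_mod_def by blast
  have "mat_cong_mod A n J M (mat_smult A n (c \<oplus>\<^bsub>A\<^esub> a \<otimes>\<^bsub>A\<^esub> \<mu>) (mat_one A n))"
    unfolding mat_cong_mod_def
  proof (intro allI impI)
    fix i j assume ij: "i < n" "j < n"
    define \<delta> where "\<delta> = (if i = j then \<one>\<^bsub>A\<^esub> else \<zero>\<^bsub>A\<^esub>)"
    have \<delta>: "\<delta> \<in> carrier A" unfolding \<delta>_def by simp
    have scalar: "mat_smult A n d (mat_one A n) (i,j) = d \<otimes>\<^bsub>A\<^esub> \<delta>" for d
      using ij by (simp add: mat_entry_simps \<delta>_def)
    have "M (i,j) = mat_smult A n c (mat_one A n) (i,j) \<oplus>\<^bsub>A\<^esub> Y (i,j) \<oplus>\<^bsub>A\<^esub> a \<otimes>\<^bsub>A\<^esub> Z (i,j)"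
      using decomp ij by blast
    then have Mij: "M (i,j) = c \<otimes>\<^bsub>A\<^esub> \<delta> \<oplus>\<^bsub>A\<^esub> Y (i,j) \<oplus>\<^bsub>A\<^esub> a \<otimes>\<^bsub>A\<^esub> Z (i,j)"
      unfolding scalar .
    have "M (i,j) \<ominus>\<^bsub>A\<^esub> mat_smult A n (c \<oplus>\<^bsub>A\<^esub> a \<otimes>\<^bsub>A\<^esub> \<mu>) (mat_one A n) (i,j)
        = Y (i,j) \<oplus>\<^bsub>A\<^esub> a \<otimes>\<^bsub>A\<^esub> (Z (i,j) \<ominus>\<^bsub>A\<^esub> mat_smult A n \<mu> (mat_one A n) (i,j))"
      unfolding scalar Mij using c a \<mu>(1) \<delta> mat_carrierD[OF Y ij] mat_carrierD[OF Z ij] by algebra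
    also have "\<dots> \<in> J"
    proof -
      have "Z (i,j) \<ominus>\<^bsub>A\<^esub> mat_smult A n \<mu> (mat_one A n) (i,j) \<in> max_ideal A"
        using \<mu>(2) ij unfolding mat_cong_mod_def by blast
      then have "a \<otimes>\<^bsub>A\<^esub> (Z (i,j) \<ominus>\<^bsub>A\<^esub> mat_smult A n \<mu> (mat_one A n) (i,j)) \<in> J"
        using cancel mat_carrierD[OF Z ij] \<mu>(1) \<delta> unfolding scalar by simp
      then show ?thesis using YJ ij additive_subgroup.a_closed[OF ideal.axioms(1)[OF J]] by blast
    qed
    finally show "M (i,j) \<ominus>\<^bsub>A\<^esub> mat_smult A n (c \<oplus>\<^bsub>A\<^esub> a \<otimes>\<^bsub>A\<^esub> \<mu>) (mat_one A n) (i,j) \<in> J" .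
  qed
  then show ?thesis unfolding scalar_mod_def using c a \<mu>(1) by blast
qed

lemma scalar_mod_of_commutes_mod:
  assumes loc: "local_ring A" and AC: "algebraically_closed (A Quot max_ideal A)"
    and fl: "W_finite_length W A \<phi>" and hom: "\<phi> \<in> ring_hom W A"
    and irr: "residually_irreducible A n H \<eta>" and \<eta>: "\<forall>h\<in>H. \<eta> h \<in> mat_carrier A n"
    and M: "M \<in> mat_carrier A n"
  shows "ideal J A \<Longrightarrow> commutes_mod A n H \<eta> J M \<Longrightarrow> scalar_mod A n J M"
  using W_finite_length_wf_ideal_supset[OF fl hom]
proof (induction J rule: wf_induct_rule)
  case (less J)
  interpret A: cring A by (rule local_ringD(1)[OF loc])
  show ?case
  proof (cases "J = carrier A")
    case True
    have "M (i,j) \<ominus>\<^bsub>A\<^esub> mat_smult A n \<zero>\<^bsub>A\<^esub> (mat_one A n) (i,j) \<in> carrier A" if "i < n" "j < n" for i j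
      using mat_carrierD[OF M that] mat_carrierD[OF A.mat_smult_closed[OF A.zero_closed A.mat_one_closed] that]
      by simp
    then show ?thesis unfolding scalar_mod_def mat_cong_mod_def True by blast
  next
    case False
    obtain I a where I: "ideal I A" "J \<subset> I" and a: "a \<in> carrier A"
      and gen: "I = {x. \<exists>j\<in>J. \<exists>y\<in>carrier A. x = j \<oplus>\<^bsub>A\<^esub> a \<otimes>\<^bsub>A\<^esub> y}"
      and cancel: "\<And>z. z \<in> carrier A \<Longrightarrow> a \<otimes>\<^bsub>A\<^esub> z \<in> J \<longleftrightarrow> z \<in> max_ideal A"
      using exists_simple_ideal_extension[OF loc W_finite_length_wf_ideal_subset[OF fl hom] less.prems(1) False]
      by blast
    have "commutes_mod A n H \<eta> I M"
      using less.prems(2) I(2) unfolding commutes_mod_def mat_cong_mod_def by blast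
    then have "scalar_mod A n I M" using less.IH I less.prems(1) by blast
    then show ?thesis
      using scalar_mod_descend[OF loc AC irr \<eta> less.prems(1) a cancel M less.prems(2)] gen by simp
  qed
qed

lemma commutant_is_scalar:
  assumes loc: "local_ring A" and AC: "algebraically_closed (A Quot max_ideal A)"
    and fl: "W_finite_length W A \<phi>" and hom: "\<phi> \<in> ring_hom W A"
    and irr: "residually_irreducible A n H \<eta>" and \<eta>: "\<forall>h\<in>H. \<eta> h \<in> mat_carrier A n"
    and M: "M \<in> mat_carrier A n" and comm: "\<forall>h\<in>H. mat_mul A n M (\<eta> h) = mat_mul A n (\<eta> h) M"
  shows "\<exists>c\<in>carrier A. M = mat_smult A n c (mat_one A n)"
proof -
  interpret A: cring A by (rule local_ringD(1)[OF loc])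
  have "commutes_mod A n H \<eta> {\<zero>\<^bsub>A\<^esub>} M"
    unfolding commutes_mod_def using comm \<eta> M A.mat_cong_mod_zero_iff A.mat_mul_closed by simp
  then have "scalar_mod A n {\<zero>\<^bsub>A\<^esub>} M"
    using scalar_mod_of_commutes_mod[OF loc AC fl hom irr \<eta> M] A.zeroideal by blast
  then show ?thesis
    unfolding scalar_mod_def using A.mat_cong_mod_zero_iff[OF M] A.mat_smult_closed A.mat_one_closed by blast
qed

section \<open>Extensions differing by a character\<close>

definition mat_rep :: "'g monoid \<Rightarrow> ('a,'b) ring_scheme \<Rightarrow> nat \<Rightarrow> 'g set \<Rightarrow> ('g \<Rightarrow> nat \<times> nat \<Rightarrow> 'a) \<Rightarrow> bool" where
  "mat_rep G R n H \<rho> \<longleftrightarrow> (\<forall>g\<in>H. \<rho> g \<in> GL R n) \<and>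
     (\<forall>g\<in>H. \<forall>h\<in>H. \<rho> (g \<otimes>\<^bsub>G\<^esub> h) = mat_mul R n (\<rho> g) (\<rho> h))"

lemma smooth_rep_mat_rep: "smooth_rep G T R n H \<rho> \<Longrightarrow> mat_rep G R n H \<rho>"
  unfolding smooth_rep_def mat_rep_def by blast

lemma GL_mat_carrier: "M \<in> GL R n \<Longrightarrow> M \<in> mat_carrier R n"
  unfolding GL_def by simp

lemma GL_inverse:
  assumes "M \<in> GL R n"
  obtains N where "N \<in> mat_carrier R n" "mat_mul R n M N = mat_one R n" "mat_mul R n N M = mat_one R n"
  using assms unfolding GL_def by blast

context cring
begin

lemma mat_smult_cancel:
  assumes M: "M \<in> GL R n" and n: "n > 0" and c: "c \<in> carrier R" and d: "d \<in> carrier R"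
    and eq: "mat_smult R n c M = mat_smult R n d M"
  shows "c = d"
proof -
  obtain N where N: "N \<in> mat_carrier R n" "mat_mul R n M N = mat_one R n" by (rule GL_inverse[OF M])
  have "mat_smult R n c (mat_one R n) = mat_smult R n d (mat_one R n)"
    using mat_smult_mul_left[OF c GL_mat_carrier[OF M] N(1)] mat_smult_mul_left[OF d GL_mat_carrier[OF M] N(1)]
      eq N(2) by simp
  then have "mat_smult R n c (mat_one R n) (0,0) = mat_smult R n d (mat_one R n) (0,0)" by simp
  then show ?thesis using n c d by (simp add: mat_entry_simps)
qed

lemma mat_smult_GL_Units:
  assumes M: "M \<in> GL R n" and M': "mat_smult R n c M \<in> GL R n" and n: "n > 0" and c: "c \<in> carrier R"
  shows "c \<in> Units R"
proof -
  obtain N where N: "N \<in> mat_carrier R n" "mat_mul R n (mat_smult R n c M) N = mat_one R n"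
    by (rule GL_inverse[OF M'])
  have MN: "mat_mul R n M N \<in> mat_carrier R n" using mat_mul_closed[OF GL_mat_carrier[OF M] N(1)] .
  have "c \<otimes> mat_mul R n M N (0,0) = \<one>"
    using N(2) mat_smult_mul_left[OF c GL_mat_carrier[OF M] N(1)] n
    by (metis mat_one_entry mat_smult_entry)
  moreover have x: "mat_mul R n M N (0,0) \<in> carrier R" using mat_carrierD[OF MN n n] .
  ultimately have "mat_mul R n M N (0,0) \<otimes> c = \<one>" using c by (simp add: m_comm)
  then show ?thesis using c x \<open>c \<otimes> mat_mul R n M N (0,0) = \<one>\<close> unfolding Units_def by blast
qed

lemma mat_rep_one:
  assumes "group G" "mat_rep G R n (carrier G) \<rho>"
  shows "\<rho> \<one>\<^bsub>G\<^esub> = mat_one R n"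
proof -
  interpret G: group G by (rule assms(1))
  have \<rho>1: "\<rho> \<one>\<^bsub>G\<^esub> \<in> GL R n" "\<rho> (\<one>\<^bsub>G\<^esub> \<otimes>\<^bsub>G\<^esub> \<one>\<^bsub>G\<^esub>) = mat_mul R n (\<rho> \<one>\<^bsub>G\<^esub>) (\<rho> \<one>\<^bsub>G\<^esub>)"
    using assms(2) G.one_closed unfolding mat_rep_def by blast+
  then have \<rho>1: "\<rho> \<one>\<^bsub>G\<^esub> \<in> GL R n" "\<rho> \<one>\<^bsub>G\<^esub> = mat_mul R n (\<rho> \<one>\<^bsub>G\<^esub>) (\<rho> \<one>\<^bsub>G\<^esub>)" by simp_all
  obtain N where N: "N \<in> mat_carrier R n" "mat_mul R n (\<rho> \<one>\<^bsub>G\<^esub>) N = mat_one R n"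
    by (rule GL_inverse[OF \<rho>1(1)])
  have "mat_one R n = mat_mul R n (mat_mul R n (\<rho> \<one>\<^bsub>G\<^esub>) (\<rho> \<one>\<^bsub>G\<^esub>)) N" using N(2) \<rho>1(2) by simp
  also have "\<dots> = \<rho> \<one>\<^bsub>G\<^esub>"
    using GL_mat_carrier[OF \<rho>1(1)] N by (simp add: mat_mul_assoc mat_one_right)
  finally show ?thesis by simp
qed

lemma extensions_quotient_commutes:
  assumes N: "N \<lhd> G" and \<Lambda>: "mat_rep G R n (carrier G) \<Lambda>" and \<Lambda>': "mat_rep G R n (carrier G) \<Lambda>'"
    and agree: "\<forall>h\<in>N. \<Lambda>' h = \<Lambda> h" and g: "g \<in> carrier G"
    and inv: "Ng \<in> mat_carrier R n" "mat_mul R n (\<Lambda> g) Ng = mat_one R n" "mat_mul R n Ng (\<Lambda> g) = mat_one R n"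
  shows "\<forall>h\<in>N. mat_mul R n (mat_mul R n Ng (\<Lambda>' g)) (\<Lambda> h) = mat_mul R n (\<Lambda> h) (mat_mul R n Ng (\<Lambda>' g))"
proof
  interpret N: normal N G by (rule N)
  fix h assume h: "h \<in> N"
  define k where "k = g \<otimes>\<^bsub>G\<^esub> h \<otimes>\<^bsub>G\<^esub> inv\<^bsub>G\<^esub> g"
  have k: "k \<in> N" unfolding k_def using N.inv_op_closed2[OF g h] .
  have hc: "h \<in> carrier G" and kc: "k \<in> carrier G" using h k N.subset by auto
  have gh: "g \<otimes>\<^bsub>G\<^esub> h = k \<otimes>\<^bsub>G\<^esub> g" unfolding k_def using g hc by (simp add: N.m_assoc)
  have carr: "\<Lambda> g \<in> mat_carrier R n" "\<Lambda>' g \<in> mat_carrier R n" "\<Lambda> h \<in> mat_carrier R n" "\<Lambda> k \<in> mat_carrier R n"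
    using \<Lambda> \<Lambda>' g hc kc unfolding mat_rep_def by (auto intro: GL_mat_carrier)
  have conj: "mat_mul R n (\<rho> g) (\<Lambda> h) = mat_mul R n (\<Lambda> k) (\<rho> g)"
    if "mat_rep G R n (carrier G) \<rho>" "\<forall>h\<in>N. \<rho> h = \<Lambda> h" for \<rho>
    using that g hc kc h k gh unfolding mat_rep_def by metis
  have "mat_mul R n Ng (\<Lambda> k) = mat_mul R n Ng (mat_mul R n (\<Lambda> k) (mat_mul R n (\<Lambda> g) Ng))"
    using inv carr by (simp add: mat_one_right)
  also have "\<dots> = mat_mul R n (mat_mul R n Ng (mat_mul R n (\<Lambda> k) (\<Lambda> g))) Ng"
    using inv carr by (simp add: mat_mul_assoc mat_mul_closed)
  also have "\<dots> = mat_mul R n (mat_mul R n Ng (mat_mul R n (\<Lambda> g) (\<Lambda> h))) Ng"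
    using conj[OF \<Lambda>] by simp
  also have "\<dots> = mat_mul R n (mat_mul R n (mat_mul R n Ng (\<Lambda> g)) (\<Lambda> h)) Ng"
    by (simp only: mat_mul_assoc[OF inv(1) carr(1) carr(3)])
  also have "\<dots> = mat_mul R n (\<Lambda> h) Ng"
    using inv carr by (simp add: mat_one_left)
  finally have Ngk: "mat_mul R n Ng (\<Lambda> k) = mat_mul R n (\<Lambda> h) Ng" .
  have "mat_mul R n (mat_mul R n Ng (\<Lambda>' g)) (\<Lambda> h) = mat_mul R n Ng (mat_mul R n (\<Lambda>' g) (\<Lambda> h))"
    using inv carr by (simp add: mat_mul_assoc)
  also have "\<dots> = mat_mul R n (mat_mul R n Ng (\<Lambda> k)) (\<Lambda>' g)"
    using conj[OF \<Lambda>' agree] inv carr by (simp add: mat_mul_assoc)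
  also have "\<dots> = mat_mul R n (\<Lambda> h) (mat_mul R n Ng (\<Lambda>' g))"
    unfolding Ngk using inv carr by (simp add: mat_mul_assoc)
  finally show "mat_mul R n (mat_mul R n Ng (\<Lambda>' g)) (\<Lambda> h) = mat_mul R n (\<Lambda> h) (mat_mul R n Ng (\<Lambda>' g))" .
qed


lemma extension_scalar_multiple:
  assumes N: "N \<lhd> G" and \<Lambda>: "mat_rep G R n (carrier G) \<Lambda>" and \<Lambda>': "mat_rep G R n (carrier G) \<Lambda>'"
    and agree: "\<forall>h\<in>N. \<Lambda>' h = \<Lambda> h"
    and schur: "\<And>M. M \<in> mat_carrier R n \<Longrightarrow> \<forall>h\<in>N. mat_mul R n M (\<Lambda> h) = mat_mul R n (\<Lambda> h) M \<Longrightarrow>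
      \<exists>c\<in>carrier R. M = mat_smult R n c (mat_one R n)"
    and g: "g \<in> carrier G"
  shows "\<exists>c\<in>carrier R. \<Lambda>' g = mat_smult R n c (\<Lambda> g)"
proof -
  have \<Lambda>g: "\<Lambda> g \<in> GL R n" and \<Lambda>'g: "\<Lambda>' g \<in> mat_carrier R n"
    using \<Lambda> \<Lambda>' g unfolding mat_rep_def by (auto intro: GL_mat_carrier)
  obtain Ng where Ng: "Ng \<in> mat_carrier R n" "mat_mul R n (\<Lambda> g) Ng = mat_one R n"
    "mat_mul R n Ng (\<Lambda> g) = mat_one R n"
    by (rule GL_inverse[OF \<Lambda>g])
  obtain c where c: "c \<in> carrier R" "mat_mul R n Ng (\<Lambda>' g) = mat_smult R n c (mat_one R n)"
    using schur[OF mat_mul_closed[OF Ng(1) \<Lambda>'g] extensions_quotient_commutes[OF N \<Lambda> \<Lambda>' agree g Ng]]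
    by blast
  have "\<Lambda>' g = mat_mul R n (mat_mul R n (\<Lambda> g) Ng) (\<Lambda>' g)" using Ng(2) \<Lambda>'g by (simp add: mat_one_left)
  also have "\<dots> = mat_mul R n (\<Lambda> g) (mat_mul R n Ng (\<Lambda>' g))"
    using GL_mat_carrier[OF \<Lambda>g] Ng(1) \<Lambda>'g by (rule mat_mul_assoc)
  also have "\<dots> = mat_smult R n c (\<Lambda> g)" unfolding c(2) using mat_mul_scalar_right[OF c(1) GL_mat_carrier[OF \<Lambda>g]] .
  finally show ?thesis using c(1) by blast
qed

lemma extensions_differ_by_character:
  assumes G: "group G" and N: "N \<lhd> G" and n: "n > 0"
    and \<Lambda>: "mat_rep G R n (carrier G) \<Lambda>" and \<Lambda>': "mat_rep G R n (carrier G) \<Lambda>'"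
    and agree: "\<forall>h\<in>N. \<Lambda>' h = \<Lambda> h"
    and schur: "\<And>M. M \<in> mat_carrier R n \<Longrightarrow> \<forall>h\<in>N. mat_mul R n M (\<Lambda> h) = mat_mul R n (\<Lambda> h) M \<Longrightarrow>
      \<exists>c\<in>carrier R. M = mat_smult R n c (mat_one R n)"
  obtains \<chi> where "\<forall>g\<in>carrier G. \<chi> g \<in> Units R"
    "\<forall>g\<in>carrier G. \<forall>h\<in>carrier G. \<chi> (g \<otimes>\<^bsub>G\<^esub> h) = \<chi> g \<otimes> \<chi> h"
    "\<forall>g\<in>N. \<chi> g = \<one>"
    "\<forall>g\<in>carrier G. \<Lambda>' g = mat_smult R n (\<chi> g) (\<Lambda> g)"
proof -
  interpret G: group G by (rule G)
  have GL: "\<And>g. g \<in> carrier G \<Longrightarrow> \<Lambda> g \<in> GL R n" "\<And>g. g \<in> carrier G \<Longrightarrow> \<Lambda>' g \<in> GL R n"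
    using \<Lambda> \<Lambda>' unfolding mat_rep_def by auto
  define \<chi> where "\<chi> g = (SOME c. c \<in> carrier R \<and> \<Lambda>' g = mat_smult R n c (\<Lambda> g))" for g
  have \<chi>: "\<chi> g \<in> carrier R" "\<Lambda>' g = mat_smult R n (\<chi> g) (\<Lambda> g)" if "g \<in> carrier G" for g
    using someI_ex[OF extension_scalar_multiple[OF N \<Lambda> \<Lambda>' agree schur that, unfolded Bex_def]]
    unfolding \<chi>_def by auto
  have \<chi>_eq: "\<chi> g = c" if g: "g \<in> carrier G" and c: "c \<in> carrier R" "\<Lambda>' g = mat_smult R n c (\<Lambda> g)" for g c
    using mat_smult_cancel[OF GL(1)[OF g] n \<chi>(1)[OF g] c(1)] \<chi>(2)[OF g] c(2) by simp
  have units: "\<chi> g \<in> Units R" if g: "g \<in> carrier G" for g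
    using mat_smult_GL_Units[OF GL(1)[OF g] _ n \<chi>(1)[OF g]] GL(2)[OF g] \<chi>(2)[OF g] by simp
  have mult: "\<chi> (g \<otimes>\<^bsub>G\<^esub> h) = \<chi> g \<otimes> \<chi> h" if g: "g \<in> carrier G" and h: "h \<in> carrier G" for g h
  proof (rule \<chi>_eq)
    have carr: "\<Lambda> g \<in> mat_carrier R n" "\<Lambda> h \<in> mat_carrier R n" "\<chi> g \<in> carrier R" "\<chi> h \<in> carrier R"
      using GL_mat_carrier GL \<chi> g h by auto
    have "\<Lambda>' (g \<otimes>\<^bsub>G\<^esub> h) = mat_mul R n (mat_smult R n (\<chi> g) (\<Lambda> g)) (mat_smult R n (\<chi> h) (\<Lambda> h))"
      using \<Lambda>' g h \<chi>(2) unfolding mat_rep_def by simp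
    also have "\<dots> = mat_smult R n (\<chi> g \<otimes> \<chi> h) (mat_mul R n (\<Lambda> g) (\<Lambda> h))"
      using carr by (simp add: mat_smult_mul_left mat_smult_mul_right mat_smult_closed mat_smult_smult
          mat_mul_closed m_comm)
    also have "\<dots> = mat_smult R n (\<chi> g \<otimes> \<chi> h) (\<Lambda> (g \<otimes>\<^bsub>G\<^esub> h))"
      using \<Lambda> g h unfolding mat_rep_def by simp
    finally show "\<Lambda>' (g \<otimes>\<^bsub>G\<^esub> h) = mat_smult R n (\<chi> g \<otimes> \<chi> h) (\<Lambda> (g \<otimes>\<^bsub>G\<^esub> h))" .
  qed (use g h \<chi> in simp_all)
  have trivial: "\<chi> g = \<one>" if g: "g \<in> N" for g
  proof -
    have gc: "g \<in> carrier G" using g normal_imp_subgroup[OF N] subgroup.subset by blast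
    show ?thesis
      using \<chi>_eq[OF gc one_closed] agree g mat_smult_one[OF GL_mat_carrier[OF GL(1)[OF gc]]] by simp
  qed
  show ?thesis by (rule that[of \<chi>]) (simp_all add: units mult trivial \<chi>(2)[symmetric])
qed

end


lemma smooth_rep_kernel_open:
  assumes \<rho>: "smooth_rep G T R n H \<rho>" and R: "cring R"
  shows "openin (subtopology T H) {g\<in>H. \<rho> g = mat_one R n}"
proof -
  interpret cring R by (rule R)
  define S where "S j = {g\<in>H. mat_vec R n (\<rho> g) (unit_vec R n j) = unit_vec R n j}" for j
  have "openin (subtopology T H) (S j)" for j
    using \<rho> unit_vec_closed unfolding smooth_rep_def S_def by blast
  \<comment> \<open>the index 0 keeps the family nonempty when n = 0\<close>
  then have "openin (subtopology T H) (\<Inter>j\<in>insert 0 {..<n}. S j)" by (intro openin_Inter) auto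
  moreover have "{g\<in>H. \<rho> g = mat_one R n} = (\<Inter>j\<in>insert 0 {..<n}. S j)"
  proof (intro equalityI subsetI)
    fix g assume "g \<in> {g\<in>H. \<rho> g = mat_one R n}"
    then show "g \<in> (\<Inter>j\<in>insert 0 {..<n}. S j)"
      unfolding S_def using mat_vec_one[OF unit_vec_closed] by auto
  next
    fix g assume g: "g \<in> (\<Inter>j\<in>insert 0 {..<n}. S j)"
    then have "g \<in> H" unfolding S_def by auto
    moreover have "\<rho> g = mat_one R n"
      using g \<rho> \<open>g \<in> H\<close> unfolding S_def smooth_rep_def
      by (intro mat_eqI_unit_vec) (auto simp: mat_vec_one[OF unit_vec_closed] intro: GL_mat_carrier mat_one_closed)
    ultimately show "g \<in> {g\<in>H. \<rho> g = mat_one R n}" by simp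
  qed
  ultimately show ?thesis by simp
qed

lemma topological_group_level_set_open:
  assumes G: "topological_group G T" and U: "openin T U" "\<one>\<^bsub>G\<^esub> \<in> U"
    and invariant: "\<forall>g\<in>carrier G. \<forall>u\<in>U. f (g \<otimes>\<^bsub>G\<^esub> u) = f g"
  shows "openin T {g\<in>carrier G. f g = c}"
proof (subst openin_subopen, intro ballI)
  have grp: "group G" and top: "topspace T = carrier G"
    and mul: "continuous_map (prod_topology T T) T (\<lambda>(x, y). x \<otimes>\<^bsub>G\<^esub> y)"
    using G unfolding topological_group_def by auto
  interpret group G by (rule grp)
  fix g assume "g \<in> {g\<in>carrier G. f g = c}"
  then have g: "g \<in> carrier G" "f g = c" by auto
  define V where "V = {x \<in> topspace T. inv\<^bsub>G\<^esub> g \<otimes>\<^bsub>G\<^esub> x \<in> U}"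
  have "continuous_map T (prod_topology T T) (\<lambda>x. (inv\<^bsub>G\<^esub> g, x))"
    using g top by (intro continuous_map_pairedI) auto
  from continuous_map_compose[OF this mul]
  have "continuous_map T T (\<lambda>x. inv\<^bsub>G\<^esub> g \<otimes>\<^bsub>G\<^esub> x)" by (simp add: o_def)
  then have "openin T V" unfolding V_def by (rule openin_continuous_map_preimage[OF _ U(1)])
  moreover have "g \<in> V" unfolding V_def using g top U(2) by simp
  moreover have "V \<subseteq> {g\<in>carrier G. f g = c}"
  proof
    fix x assume "x \<in> V"
    then have x: "x \<in> carrier G" "inv\<^bsub>G\<^esub> g \<otimes>\<^bsub>G\<^esub> x \<in> U" unfolding V_def using top by auto
    have "f x = f (g \<otimes>\<^bsub>G\<^esub> (inv\<^bsub>G\<^esub> g \<otimes>\<^bsub>G\<^esub> x))" using g x by (simp add: m_assoc[symmetric])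
    also have "\<dots> = c" using invariant g x by simp
    finally show "x \<in> {g\<in>carrier G. f g = c}" using x by simp
  qed
  ultimately show "\<exists>V. openin T V \<and> g \<in> V \<and> V \<subseteq> {g\<in>carrier G. f g = c}" by blast
qed


lemma (in cring) mat_one_GL: "mat_one R n \<in> GL R n"
  unfolding GL_def using mat_one_closed mat_one_left[OF mat_one_closed] by blast

lemma twisting_character_kernel_open:
  assumes G: "topological_group G T" and R: "cring R" and n: "n > 0"
    and \<Lambda>: "smooth_rep G T R n (carrier G) \<Lambda>" and \<Lambda>': "smooth_rep G T R n (carrier G) \<Lambda>'"
    and \<chi>: "\<forall>g\<in>carrier G. \<chi> g \<in> carrier R" "\<forall>g\<in>carrier G. \<forall>h\<in>carrier G. \<chi> (g \<otimes>\<^bsub>G\<^esub> h) = \<chi> g \<otimes>\<^bsub>R\<^esub> \<chi> h"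
    and twist: "\<forall>g\<in>carrier G. \<Lambda>' g = mat_smult R n (\<chi> g) (\<Lambda> g)"
  shows "openin T {g\<in>carrier G. \<chi> g = \<one>\<^bsub>R\<^esub>}"
proof -
  interpret cring R by (rule R)
  have grp: "group G" and top: "topspace T = carrier G" using G unfolding topological_group_def by auto
  define U where "U = {g\<in>carrier G. \<Lambda> g = mat_one R n} \<inter> {g\<in>carrier G. \<Lambda>' g = mat_one R n}"
  have "subtopology T (carrier G) = T" using top subtopology_topspace by metis
  then have "openin T U"
    using smooth_rep_kernel_open[OF \<Lambda> R] smooth_rep_kernel_open[OF \<Lambda>' R] unfolding U_def
    by (simp add: openin_Int)
  moreover have "\<one>\<^bsub>G\<^esub> \<in> U"
    unfolding U_def using mat_rep_one[OF grp smooth_rep_mat_rep] \<Lambda> \<Lambda>' group.is_monoid[OF grp] by simp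
  moreover have "\<chi> u = \<one>\<^bsub>R\<^esub>" if u: "u \<in> U" for u
  proof -
    have "mat_smult R n (\<chi> u) (mat_one R n) = mat_smult R n \<one>\<^bsub>R\<^esub> (mat_one R n)"
      using u twist mat_smult_one[OF mat_one_closed] unfolding U_def by auto
    then show ?thesis using mat_smult_cancel[OF mat_one_GL n] \<chi>(1) u unfolding U_def by simp
  qed
  then have "\<forall>g\<in>carrier G. \<forall>u\<in>U. \<chi> (g \<otimes>\<^bsub>G\<^esub> u) = \<chi> g" using \<chi> unfolding U_def by simp
  ultimately show ?thesis by (rule topological_group_level_set_open[OF G])
qed


lemma smooth_extensions_differ_by_character:
  assumes G: "topological_group G T" and N: "N \<lhd> G" and R: "cring R" and n: "n > 0"
    and \<Lambda>: "smooth_rep G T R n (carrier G) \<Lambda>" and \<Lambda>': "smooth_rep G T R n (carrier G) \<Lambda>'"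
    and agree: "\<forall>h\<in>N. \<Lambda>' h = \<Lambda> h"
    and schur: "\<And>M. M \<in> mat_carrier R n \<Longrightarrow> \<forall>h\<in>N. mat_mul R n M (\<Lambda> h) = mat_mul R n (\<Lambda> h) M \<Longrightarrow>
      \<exists>c\<in>carrier R. M = mat_smult R n c (mat_one R n)"
  shows "\<exists>\<chi>. smooth_char_quot G T R N \<chi> \<and> (\<forall>g\<in>carrier G. \<Lambda>' g = mat_smult R n (\<chi> g) (\<Lambda> g))"
proof -
  have grp: "group G" using G unfolding topological_group_def by simp
  obtain \<chi> where \<chi>: "\<forall>g\<in>carrier G. \<chi> g \<in> Units R"
    "\<forall>g\<in>carrier G. \<forall>h\<in>carrier G. \<chi> (g \<otimes>\<^bsub>G\<^esub> h) = \<chi> g \<otimes>\<^bsub>R\<^esub> \<chi> h"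
    "\<forall>g\<in>N. \<chi> g = \<one>\<^bsub>R\<^esub>" "\<forall>g\<in>carrier G. \<Lambda>' g = mat_smult R n (\<chi> g) (\<Lambda> g)"
    using cring.extensions_differ_by_character[OF R grp N n smooth_rep_mat_rep[OF \<Lambda>]
        smooth_rep_mat_rep[OF \<Lambda>'] agree schur] by blast
  have "\<forall>g\<in>carrier G. \<chi> g \<in> carrier R" using \<chi>(1) unfolding Units_def by blast
  then have "openin T {g\<in>carrier G. \<chi> g = \<one>\<^bsub>R\<^esub>}"
    using twisting_character_kernel_open[OF G R n \<Lambda> \<Lambda>'] \<chi>(2,4) by blast
  then have "smooth_char_quot G T R N \<chi>" unfolding smooth_char_quot_def using \<chi>(1-3) by blast
  then show ?thesis using \<chi>(4) by blast
qed

theorem mainTheorem8: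
  fixes J :: "'g monoid" and T :: "'g topology" and J1 :: "'g set"
    and W :: "'w ring" and l :: nat and A :: "'a ring" and \<phi> :: "'w \<Rightarrow> 'a"
    and n :: nat and \<eta> \<Lambda> \<Lambda>' :: "'g \<Rightarrow> nat \<times> nat \<Rightarrow> 'a"
  assumes "locally_profinite J T"
    and "J1 \<lhd> J" and "compactin T J1"
    and "witt_Fbar W l" and "fin_length_local_W_alg W A \<phi>"
    and "smooth_rep J T A n J1 \<eta>"
    and "residually_irreducible A n J1 \<eta>"
    and "smooth_rep J T A n (carrier J) \<Lambda>" and "\<forall>g\<in>J1. \<Lambda> g = \<eta> g"
    and "smooth_rep J T A n (carrier J) \<Lambda>'" and "\<forall>g\<in>J1. \<Lambda>' g = \<eta> g"
  shows "\<exists>\<chi>. smooth_char_quot J T A J1 \<chi> \<and>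
           (\<exists>P\<in>GL A n. \<forall>g\<in>carrier J.
              mat_mul A n P (\<Lambda>' g) = mat_mul A n (mat_smult A n (\<chi> g) (\<Lambda> g)) P)"
proof -
  have G: "topological_group J T" using assms(1) unfolding locally_profinite_def by simp
  have loc: "local_ring A" and fl: "W_finite_length W A \<phi>" "\<phi> \<in> ring_hom W A"
    using assms(5) unfolding fin_length_local_W_alg_def by auto
  interpret A: cring A by (rule local_ringD(1)[OF loc])
  have n: "n > 0" using assms(7) unfolding residually_irreducible_def irreducible_rep_def by simp
  have \<eta>: "\<forall>h\<in>J1. \<eta> h \<in> mat_carrier A n" using assms(6) unfolding smooth_rep_def by (auto intro: GL_mat_carrier)
  have "\<exists>c\<in>carrier A. M = mat_smult A n c (mat_one A n)"
    if "M \<in> mat_carrier A n" "\<forall>h\<in>J1. mat_mul A n M (\<Lambda> h) = mat_mul A n (\<Lambda> h) M" for M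
    using commutant_is_scalar[OF loc residue_field_algebraically_closed[OF assms(4,5)] fl assms(7) \<eta>]
      that assms(9) by simp
  then obtain \<chi> where "smooth_char_quot J T A J1 \<chi>" and twist: "\<forall>g\<in>carrier J. \<Lambda>' g = mat_smult A n (\<chi> g) (\<Lambda> g)"
    using smooth_extensions_differ_by_character[OF G assms(2) A.cring_axioms n assms(8,10)] assms(9,11) by auto
  moreover have "mat_mul A n (mat_one A n) (\<Lambda>' g) = mat_mul A n (\<Lambda>' g) (mat_one A n)" if "g \<in> carrier J" for g
  proof -
    have "\<Lambda>' g \<in> mat_carrier A n" using assms(10) that unfolding smooth_rep_def by (auto intro: GL_mat_carrier)
    then show ?thesis by (simp add: A.mat_one_left A.mat_one_right)
  qed
  ultimately show ?thesis using A.mat_one_GL twist by auto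
qed

end
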